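(* In a knapsack budgeted game $(N,v)$ with representation $(\{(l_1,w_1),\ldots,(l_{|N|},w_{|N|})\}, l_{\mathrm{bin}})$, the Shapley value $\phi_i(v)$ of any given agent $i$ can be computed exactly in time $O\big(l_{\mathrm{bin}}(w_{\max}+1)^{l_{\mathrm{bin}}+1}|N|^2\big)$, where $w_{\max}=\lceil l_{\mathrm{bin}}\cdot \max_k w_k/l_k\rceil$.
   Context: A cooperative game $(N,v)$ consists of a finite set $N$ of agents and a function $v:2^N\to\mathbb R$ with $v(\emptyset)=0$. The Shapley value of agent $i$ is $\phi_i(v)=\sum_{S\subseteq N\setminus\{i\}}\frac{|S|!\,(|N|-|S|-1)!}{|N|!}\big(v(S\cup\{i\})-v(S)\big)$. A knapsack budgeted game is a cooperative game $(N,v)$, with agents labeled $1,\ldots,|N|$, given by nonnegative integers $(\{(l_1,w_1),\ldots,(l_{|N|},w_{|N|})\}, l_{\mathrm{bin}})$ with $0<l_i\le l_{\mathrm{bin}}$ for all $i$, such that $v(S)=\max_{S'\subseteq S:\ l(S')\le l_{\mathrm{bin}}} w(S')$ for all $S\subseteq N$, where $l(S')=\sum_{k\in S'}l_k$ and $w(S')=\sum_{k\in S'}w_k$. Running times count arithmetic operations at unit cost. *)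

theory Defs
  imports Complex_Main
begin

definition shapley :: "nat \<Rightarrow> (nat set \<Rightarrow> real) \<Rightarrow> nat \<Rightarrow> real" where
  "shapley n v i =
     (\<Sum>S\<in>Pow ({1..n} - {i}).
        (fact (card S) * fact (n - card S - 1) / fact n) * (v (S \<union> {i}) - v S))"

definition knapsack_game :: "(nat \<Rightarrow> nat) \<Rightarrow> (nat \<Rightarrow> nat) \<Rightarrow> nat \<Rightarrow> nat set \<Rightarrow> real" where
  "knapsack_game l w lbin S =
     real (Max {(\<Sum>k\<in>S'. w k) | S'. S' \<subseteq> S \<and> (\<Sum>k\<in>S'. l k) \<le> lbin})"

definition valid_knapsack :: "nat \<Rightarrow> (nat \<Rightarrow> nat) \<Rightarrow> nat \<Rightarrow> bool" where
  "valid_knapsack n l lbin = (\<forall>k\<in>{1..n}. 0 < l k \<and> l k \<le> lbin)"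

definition w_max :: "nat \<Rightarrow> (nat \<Rightarrow> nat) \<Rightarrow> (nat \<Rightarrow> nat) \<Rightarrow> nat \<Rightarrow> int" where
  "w_max n l w lbin = \<lceil>real lbin * (MAX k\<in>{1..n}. real (w k) / real (l k))\<rceil>"

type_synonym mem = "nat \<Rightarrow> rat"

datatype expr =
    Const rat
  | Load expr
  | Plus expr expr
  | Minus expr expr
  | Times expr expr
  | Divide expr expr

datatype bexp = Le expr expr | Not bexp | And bexp bexp

datatype com =
    Skip
  | Store expr expr
  | Seq com com
  | If bexp com com
  | While bexp com

definition addr :: "rat \<Rightarrow> nat" where
  "addr x = nat \<lfloor>x\<rfloor>"

fun eval :: "expr \<Rightarrow> mem \<Rightarrow> rat" where
  "eval (Const c) M = c"
| "eval (Load e) M = M (addr (eval e M))"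
| "eval (Plus a b) M = eval a M + eval b M"
| "eval (Minus a b) M = eval a M - eval b M"
| "eval (Times a b) M = eval a M * eval b M"
| "eval (Divide a b) M = eval a M / eval b M"

fun beval :: "bexp \<Rightarrow> mem \<Rightarrow> bool" where
  "beval (Le a b) M = (eval a M \<le> eval b M)"
| "beval (Not b) M = (\<not> beval b M)"
| "beval (And a b) M = (beval a M \<and> beval b M)"

fun ecost :: "expr \<Rightarrow> nat" where
  "ecost (Const c) = 1"
| "ecost (Load e) = 1 + ecost e"
| "ecost (Plus a b) = 1 + ecost a + ecost b"
| "ecost (Minus a b) = 1 + ecost a + ecost b"
| "ecost (Times a b) = 1 + ecost a + ecost b"
| "ecost (Divide a b) = 1 + ecost a + ecost b"

fun bcost :: "bexp \<Rightarrow> nat" where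
  "bcost (Le a b) = 1 + ecost a + ecost b"
| "bcost (Not b) = 1 + bcost b"
| "bcost (And a b) = 1 + bcost a + bcost b"

inductive exec :: "com \<Rightarrow> mem \<Rightarrow> nat \<Rightarrow> mem \<Rightarrow> bool" where
  exec_Skip: "exec Skip M 1 M"
| exec_Store: "exec (Store a e) M (1 + ecost a + ecost e)
                  (M(addr (eval a M) := eval e M))"
| exec_Seq: "exec c1 M t1 M1 \<Longrightarrow> exec c2 M1 t2 M2 \<Longrightarrow> exec (Seq c1 c2) M (t1 + t2) M2"
| exec_IfT: "beval b M \<Longrightarrow> exec c1 M t M' \<Longrightarrow> exec (If b c1 c2) M (1 + bcost b + t) M'"
| exec_IfF: "\<not> beval b M \<Longrightarrow> exec c2 M t M' \<Longrightarrow> exec (If b c1 c2) M (1 + bcost b + t) M'"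
| exec_WhileF: "\<not> beval b M \<Longrightarrow> exec (While b c) M (1 + bcost b) M"
| exec_WhileT: "beval b M \<Longrightarrow> exec c M t1 M1 \<Longrightarrow> exec (While b c) M1 t2 M2 \<Longrightarrow>
                  exec (While b c) M (1 + bcost b + t1 + t2) M2"

text \<open>Input encoding of an instance (l, w, lbin) with n agents and query agent i:
  register 0 holds n, registers 1..n hold l_1..l_n, registers n+1..2n hold w_1..w_n,
  register 2n+1 holds lbin, register 2n+2 holds i; all other registers are 0.
  The output is read from register 0 at termination.\<close>

definition input_mem :: "nat \<Rightarrow> (nat \<Rightarrow> nat) \<Rightarrow> (nat \<Rightarrow> nat) \<Rightarrow> nat \<Rightarrow> nat \<Rightarrow> mem" where
  "input_mem n l w lbin i = (\<lambda>r.
     if r = 0 then of_nat n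
     else if r \<le> n then of_nat (l r)
     else if r \<le> 2 * n then of_nat (w (r - n))
     else if r = 2 * n + 1 then of_nat lbin
     else if r = 2 * n + 2 then of_nat i
     else 0)"

end

theory Submission
  imports Defs
begin

text \<open>For a coalition \<open>S\<close> let \<open>p\<^sub>S(c)\<close> be the best weight that fits from \<open>S\<close> into capacity
  \<open>c \<le> l\<^sub>b\<^sub>i\<^sub>n\<close>. Every value of \<open>p\<^sub>S\<close> is at most \<open>w\<^sub>m\<^sub>a\<^sub>x\<close>, so the whole profile \<open>p\<^sub>S\<close> is a single number
  \<open>< Q = (w\<^sub>m\<^sub>a\<^sub>x + 1)\<^bsup>l\<^sub>b\<^sub>i\<^sub>n + 1\<^esup>\<close> written in base \<open>w\<^sub>m\<^sub>a\<^sub>x + 1\<close>, and \<open>v(S) = p\<^sub>S(l\<^sub>b\<^sub>i\<^sub>n)\<close> is one of its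
  digits. By the knapsack recurrence \<open>p\<^bsub>S\<union>{k}\<^esub>(c) = max (p\<^sub>S(c)) (p\<^sub>S(c - l\<^sub>k) + w\<^sub>k)\<close> the code of
  \<open>S \<union> {k}\<close> depends only on the code of \<open>S\<close>. Hence the numbers of coalitions of the agents other
  than \<open>i\<close> with given size and given code form a table of \<open>n \<times> Q\<close> counters that a dynamic
  program builds by adding the agents one at a time, each agent costing \<open>O(n Q l\<^sub>b\<^sub>i\<^sub>n)\<close> operations.
  The Shapley value is a weighted sum over this table, with the marginal contribution of \<open>i\<close>
  read off the digits of a code.\<close>

section \<open>Total correctness with cost bounds\<close>

definition runs_within :: "com \<Rightarrow> mem \<Rightarrow> nat \<Rightarrow> (mem \<Rightarrow> bool) \<Rightarrow> bool" where
  "runs_within c M b Q \<longleftrightarrow> (\<exists>t M'. exec c M t M' \<and> t \<le> b \<and> Q M')"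

fun loop_free :: "com \<Rightarrow> bool" where
  "loop_free Skip = True"
| "loop_free (Store a e) = True"
| "loop_free (Seq c1 c2) = (loop_free c1 \<and> loop_free c2)"
| "loop_free (If b c1 c2) = (loop_free c1 \<and> loop_free c2)"
| "loop_free (While b c) = False"

fun run_lf :: "com \<Rightarrow> mem \<Rightarrow> mem" where
  "run_lf Skip M = M"
| "run_lf (Store a e) M = M(addr (eval a M) := eval e M)"
| "run_lf (Seq c1 c2) M = run_lf c2 (run_lf c1 M)"
| "run_lf (If b c1 c2) M = (if beval b M then run_lf c1 M else run_lf c2 M)"
| "run_lf (While b c) M = M"

fun lf_cost :: "com \<Rightarrow> nat" where
  "lf_cost Skip = 1"
| "lf_cost (Store a e) = 1 + ecost a + ecost e"
| "lf_cost (Seq c1 c2) = lf_cost c1 + lf_cost c2"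
| "lf_cost (If b c1 c2) = 1 + bcost b + max (lf_cost c1) (lf_cost c2)"
| "lf_cost (While b c) = 0"

lemma exec_loop_free: "loop_free c \<Longrightarrow> \<exists>t. exec c M t (run_lf c M) \<and> t \<le> lf_cost c"
proof (induction c arbitrary: M)
  case Skip
  then show ?case by (auto intro: exec.intros)
next
  case (Store a e)
  have "run_lf (Store a e) M = M(addr (eval a M) := eval e M)" "lf_cost (Store a e) = 1 + ecost a + ecost e"
    by simp_all
  then show ?case using exec_Store[of a e M] by (metis order_refl)
next
  case (Seq c1 c2)
  then obtain t1 t2 where "exec c1 M t1 (run_lf c1 M)" "t1 \<le> lf_cost c1"
    and "exec c2 (run_lf c1 M) t2 (run_lf c2 (run_lf c1 M))" "t2 \<le> lf_cost c2"
    by fastforce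
  then show ?case by (force intro: exec_Seq)
next
  case (If b c1 c2)
  then show ?case
    by (cases "beval b M") (force intro: exec_IfT exec_IfF)+
qed auto

lemma runs_within_loop_free:
  "loop_free c \<Longrightarrow> Q (run_lf c M) \<Longrightarrow> lf_cost c \<le> b \<Longrightarrow> runs_within c M b Q"
  unfolding runs_within_def using exec_loop_free by (meson order_trans)

lemma runs_within_Seq:
  "runs_within c1 M b1 (\<lambda>M1. runs_within c2 M1 b2 Q) \<Longrightarrow> b1 + b2 \<le> b \<Longrightarrow> runs_within (Seq c1 c2) M b Q"
  unfolding runs_within_def by (meson add_le_mono exec_Seq order_trans)

lemma runs_within_Seq_loop_free:
  "loop_free c1 \<Longrightarrow> runs_within c2 (run_lf c1 M) b_rest Q \<Longrightarrow> lf_cost c1 + b_rest \<le> b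
   \<Longrightarrow> runs_within (Seq c1 c2) M b Q"
  by (rule runs_within_Seq[of c1 M "lf_cost c1" _ b_rest]) (auto intro: runs_within_loop_free)

lemma runs_within_mono:
  "runs_within c M b Q \<Longrightarrow> b \<le> b' \<Longrightarrow> (\<And>M. Q M \<Longrightarrow> Q' M) \<Longrightarrow> runs_within c M b' Q'"
  unfolding runs_within_def by (meson order_trans)

lemma runs_within_If:
  "(beval bb M \<Longrightarrow> runs_within c1 M b1 Q) \<Longrightarrow> (\<not> beval bb M \<Longrightarrow> runs_within c2 M b1 Q)
   \<Longrightarrow> 1 + bcost bb + b1 \<le> b \<Longrightarrow> runs_within (If bb c1 c2) M b Q"
  unfolding runs_within_def by (cases "beval bb M") (fastforce intro: exec_IfT exec_IfF)+

lemma runs_within_While_from: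
  assumes body: "\<And>j M. j < m \<Longrightarrow> I j M \<Longrightarrow> beval bb M \<and> runs_within c M B (I (Suc j))"
    and fin: "\<And>M. I m M \<Longrightarrow> \<not> beval bb M \<and> Q M"
  shows "j \<le> m \<Longrightarrow> I j M \<Longrightarrow> runs_within (While bb c) M ((m - j) * (1 + bcost bb + B) + 1 + bcost bb) Q"
proof (induction "m - j" arbitrary: j M)
  case 0
  then have "j = m" by auto
  with 0 fin have "\<not> beval bb M" "Q M" by auto
  then show ?case unfolding runs_within_def using exec_WhileF[of bb M c] \<open>j = m\<close> by fastforce
next
  case (Suc k)
  then have jm: "j < m" by auto
  from body[OF jm Suc.prems(2)] obtain t1 M1
    where b: "beval bb M" "exec c M t1 M1" "t1 \<le> B" "I (Suc j) M1"
    unfolding runs_within_def by auto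
  have "k = m - Suc j" using Suc.hyps(2) by auto
  from Suc.hyps(1)[OF this _ b(4)] jm obtain t2 M2 where
    r: "exec (While bb c) M1 t2 M2" "t2 \<le> (m - Suc j) * (1 + bcost bb + B) + 1 + bcost bb" "Q M2"
    unfolding runs_within_def by auto
  have "m - j = Suc (m - Suc j)" using jm by auto
  then have "1 + bcost bb + t1 + t2 \<le> (m - j) * (1 + bcost bb + B) + 1 + bcost bb"
    using b(3) r(2) by simp
  then show ?case unfolding runs_within_def using exec_WhileT[OF b(1) b(2) r(1)] r(3) by blast
qed

lemma runs_within_While:
  assumes "I 0 M"
    and "\<And>j M. j < m \<Longrightarrow> I j M \<Longrightarrow> beval bb M \<and> runs_within c M B (I (Suc j))"
    and "\<And>M. I m M \<Longrightarrow> \<not> beval bb M \<and> Q M"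
    and "m * (1 + bcost bb + B) + 1 + bcost bb \<le> b"
  shows "runs_within (While bb c) M b Q"
  using runs_within_While_from[of m I bb c B Q 0 M, OF assms(2,3)] assms(1,4) runs_within_mono by force

lemma loop_cost_le: "m \<le> M \<Longrightarrow> 1 + bc + B \<le> Y \<Longrightarrow> m * (1 + bc + B) + 1 + bc \<le> Suc M * Y"
proof -
  assume a: "m \<le> M" "1 + bc + B \<le> Y"
  have "m * (1 + bc + B) \<le> M * Y" using a by (intro mult_mono) auto
  then show ?thesis using a by simp
qed

section \<open>The knapsack recurrence\<close>

definition best_weight :: "(nat \<Rightarrow> nat) \<Rightarrow> (nat \<Rightarrow> nat) \<Rightarrow> nat set \<Rightarrow> nat \<Rightarrow> nat" where
  "best_weight l w S c = Max {(\<Sum>k\<in>S'. w k) | S'. S' \<subseteq> S \<and> (\<Sum>k\<in>S'. l k) \<le> c}"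

lemma knapsack_game_eq_best_weight: "knapsack_game l w lbin S = real (best_weight l w S lbin)"
  unfolding knapsack_game_def best_weight_def by simp

lemma finite_feasible_weights:
  assumes "finite S" shows "finite {(\<Sum>k\<in>S'. w k) | S'. S' \<subseteq> S \<and> (\<Sum>k\<in>S'. l k) \<le> c}"
proof -
  have "{(\<Sum>k\<in>S'. w k) | S'. S' \<subseteq> S \<and> (\<Sum>k\<in>S'. l k) \<le> c} \<subseteq> (\<lambda>S'. \<Sum>k\<in>S'. w k) ` Pow S" by auto
  then show ?thesis using assms finite_subset by blast
qed

lemma best_weight_ge:
  "finite S \<Longrightarrow> S' \<subseteq> S \<Longrightarrow> (\<Sum>k\<in>S'. l k) \<le> c \<Longrightarrow> (\<Sum>k\<in>S'. w k) \<le> best_weight l w S c"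
  unfolding best_weight_def by (rule Max_ge[OF finite_feasible_weights]) auto

lemma best_weight_obtain:
  assumes "finite S"
  obtains S' where "S' \<subseteq> S" "(\<Sum>k\<in>S'. l k) \<le> c" "best_weight l w S c = (\<Sum>k\<in>S'. w k)"
proof -
  have "best_weight l w S c \<in> {(\<Sum>k\<in>S'. w k) | S'. S' \<subseteq> S \<and> (\<Sum>k\<in>S'. l k) \<le> c}"
    unfolding best_weight_def by (rule Max_in[OF finite_feasible_weights[OF assms]]) auto
  then show ?thesis using that by blast
qed

lemma best_weight_empty: "best_weight l w {} c = 0"
  using best_weight_obtain[of "{}" l c w] by auto

lemma best_weight_mono:
  assumes "finite T" "S \<subseteq> T" shows "best_weight l w S c \<le> best_weight l w T c"
proof -
  obtain S' where "S' \<subseteq> S" "(\<Sum>j\<in>S'. l j) \<le> c" "best_weight l w S c = (\<Sum>j\<in>S'. w j)"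
    using best_weight_obtain[OF finite_subset[OF assms(2,1)]] by blast
  then show ?thesis using best_weight_ge[OF assms(1), of S' l c w] assms(2) by auto
qed

lemma best_weight_insert_ge:
  assumes fin: "finite S" and k: "k \<notin> S" and c: "l k \<le> c"
  shows "best_weight l w S (c - l k) + w k \<le> best_weight l w (insert k S) c"
proof -
  obtain S' where S': "S' \<subseteq> S" "(\<Sum>j\<in>S'. l j) \<le> c - l k" "best_weight l w S (c - l k) = (\<Sum>j\<in>S'. w j)"
    using best_weight_obtain[OF fin] by blast
  have fS': "finite S'" and kS': "k \<notin> S'" using S'(1) fin k finite_subset by auto
  have "(\<Sum>j\<in>insert k S'. l j) \<le> c" using fS' kS' S'(2) c by simp
  then have "(\<Sum>j\<in>insert k S'. w j) \<le> best_weight l w (insert k S) c"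
    using best_weight_ge[of "insert k S"] fin S'(1) by blast
  then show ?thesis using fS' kS' S'(3) by simp
qed

lemma best_weight_insert_le:
  assumes fin: "finite S"
  shows "best_weight l w (insert k S) c
           \<le> max (best_weight l w S c) (if l k \<le> c then best_weight l w S (c - l k) + w k else 0)"
proof -
  obtain S' where S': "S' \<subseteq> insert k S" "(\<Sum>j\<in>S'. l j) \<le> c" "best_weight l w (insert k S) c = (\<Sum>j\<in>S'. w j)"
    using best_weight_obtain[of "insert k S" l c w] fin by auto
  show ?thesis
  proof (cases "k \<in> S'")
    case True
    have fS': "finite S'" using S'(1) fin finite_subset by blast
    have sl: "(\<Sum>j\<in>S'. l j) = l k + (\<Sum>j\<in>S'-{k}. l j)"
      and sw: "(\<Sum>j\<in>S'. w j) = w k + (\<Sum>j\<in>S'-{k}. w j)"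
      using True fS' by (simp_all add: sum.remove)
    have "S' - {k} \<subseteq> S" "(\<Sum>j\<in>S'-{k}. l j) \<le> c - l k" using S'(1,2) sl by auto
    then have "(\<Sum>j\<in>S'-{k}. w j) \<le> best_weight l w S (c - l k)" using best_weight_ge[OF fin] by blast
    moreover have "l k \<le> c" using sl S'(2) by auto
    ultimately show ?thesis using S'(3) sw by auto
  next
    case False
    then have "S' \<subseteq> S" using S'(1) by auto
    then show ?thesis using best_weight_ge[OF fin _ S'(2), of w] S'(3) by auto
  qed
qed

lemma best_weight_insert:
  assumes "finite S" and "k \<notin> S"
  shows "best_weight l w (insert k S) c
           = max (best_weight l w S c) (if l k \<le> c then best_weight l w S (c - l k) + w k else 0)"
  using best_weight_insert_le[OF assms(1)] best_weight_insert_ge[OF assms]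
    best_weight_mono[of "insert k S" S] assms(1)
  by (intro antisym) (auto simp: subset_insertI)

section \<open>Base-\<open>B\<close> expansions\<close>

lemma digit_expansion_less:
  fixes B :: nat
  shows "(\<And>c. c < m \<Longrightarrow> f c < B) \<Longrightarrow> (\<Sum>c<m. f c * B ^ c) < B ^ m"
proof (induction m)
  case 0
  then show ?case by simp
next
  case (Suc m)
  then have IH: "(\<Sum>c<m. f c * B ^ c) < B ^ m" by auto
  have fm: "f m + 1 \<le> B" using Suc.prems[of m] by auto
  have "(\<Sum>c<Suc m. f c * B ^ c) = (\<Sum>c<m. f c * B ^ c) + f m * B ^ m" by simp
  also have "\<dots> < B ^ m + f m * B ^ m" using IH by simp
  also have "\<dots> = (f m + 1) * B ^ m" by simp
  also have "\<dots> \<le> B * B ^ m" using fm by (rule mult_right_mono) simp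
  finally show ?case by simp
qed

lemma digit_expansion_digit:
  fixes B :: nat
  shows "(\<And>c. c < m \<Longrightarrow> f c < B) \<Longrightarrow> j < m \<Longrightarrow> (\<Sum>c<m. f c * B ^ c) div B ^ j mod B = f j"
proof (induction m arbitrary: j)
  case 0
  then show ?case by simp
next
  case (Suc m)
  have B_pos: "0 < B" using Suc.prems(1)[of 0] by auto
  define r where "r = (\<Sum>c<m. f c * B ^ c)"
  have rl: "r < B ^ m" unfolding r_def using Suc.prems(1) by (intro digit_expansion_less) auto
  have S: "(\<Sum>c<Suc m. f c * B ^ c) = r + f m * B ^ m" unfolding r_def by simp
  show ?case
  proof (cases "j = m")
    case True
    have "(r + f m * B ^ m) div B ^ m = f m"
      using rl B_pos by (simp add: div_mult_self1 div_less)
    then show ?thesis using S True Suc.prems(1)[of m] by simp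
  next
    case False
    then have jm: "j < m" using Suc.prems(2) by auto
    have "B ^ m = B ^ j * B ^ (m - j)" using jm by (simp add: power_add[symmetric])
    then have e: "f m * B ^ m = B ^ j * (f m * B ^ (m - j))" by simp
    have "(r + f m * B ^ m) div B ^ j = r div B ^ j + f m * B ^ (m - j)"
      unfolding e using B_pos by simp
    moreover have "m - j = Suc (m - j - 1)" using jm by auto
    then have "f m * B ^ (m - j) = B * (f m * B ^ (m - j - 1))"
      by (metis mult.left_commute power_Suc)
    ultimately have "(r + f m * B ^ m) div B ^ j mod B = r div B ^ j mod B"
      by simp
    also have "\<dots> = f j" unfolding r_def using Suc.IH[of j] Suc.prems(1) jm by auto
    finally show ?thesis using S by simp
  qed
qed

lemma card_eq_sum_card_fibres:
  assumes "finite A" "finite X" "g ` A \<subseteq> X"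
  shows "card A = (\<Sum>y\<in>X. card {a\<in>A. g a = y})"
  using sum.group[OF assms, of "\<lambda>_. (1::nat)"] by simp

lemma sum_Pow_group_card:
  fixes F :: "nat \<Rightarrow> nat \<Rightarrow> 'a::comm_semiring_1"
  assumes P: "finite P" "card P < m" and g: "\<And>S. S \<subseteq> P \<Longrightarrow> g S < q"
  shows "(\<Sum>S\<in>Pow P. F (card S) (g S))
           = (\<Sum>s<m. \<Sum>x<q. of_nat (card {S. S \<subseteq> P \<and> card S = s \<and> g S = x}) * F s x)"
proof -
  have image: "(\<lambda>S. (card S, g S)) ` Pow P \<subseteq> {..<m} \<times> {..<q}"
  proof
    fix y assume "y \<in> (\<lambda>S. (card S, g S)) ` Pow P"
    then obtain S where S: "S \<subseteq> P" "y = (card S, g S)" by auto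
    then have "card S < m" using card_mono[OF P(1) S(1)] P(2) by linarith
    then show "y \<in> {..<m} \<times> {..<q}" using g[OF S(1)] S(2) by simp
  qed
  have fibre: "(\<Sum>S\<in>{S\<in>Pow P. (card S, g S) = y}. F (card S) (g S))
                 = of_nat (card {S. S \<subseteq> P \<and> card S = fst y \<and> g S = snd y}) * F (fst y) (snd y)" for y
  proof -
    have A: "{S\<in>Pow P. (card S, g S) = y} = {S. S \<subseteq> P \<and> card S = fst y \<and> g S = snd y}" by (cases y) auto
    have "(\<Sum>S\<in>{S. S \<subseteq> P \<and> card S = fst y \<and> g S = snd y}. F (card S) (g S))
            = (\<Sum>S\<in>{S. S \<subseteq> P \<and> card S = fst y \<and> g S = snd y}. F (fst y) (snd y))"
      by (rule sum.cong) auto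
    then show ?thesis unfolding A by simp
  qed
  have "(\<Sum>S\<in>Pow P. F (card S) (g S))
          = (\<Sum>y\<in>{..<m} \<times> {..<q}. \<Sum>S\<in>{S\<in>Pow P. (card S, g S) = y}. F (card S) (g S))"
    using P(1) by (intro sum.group[symmetric, OF _ _ image]) auto
  also have "\<dots> = (\<Sum>(s, x)\<in>{..<m} \<times> {..<q}. of_nat (card {S. S \<subseteq> P \<and> card S = s \<and> g S = x}) * F s x)"
    unfolding fibre by (simp add: case_prod_beta)
  finally show ?thesis by (simp only: sum.cartesian_product)
qed

section \<open>Counting coalitions by their profile code\<close>

locale knapsack_instance =
  fixes n :: nat and l w :: "nat \<Rightarrow> nat" and lbin i :: nat
  assumes valid: "valid_knapsack n l lbin" and irange: "i \<in> {1..n}"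
begin

definition "W = nat (w_max n l w lbin)"
definition "B = Suc W"
definition "Q = B ^ Suc lbin"

definition digit :: "nat \<Rightarrow> nat \<Rightarrow> nat" where "digit x c = x div B ^ c mod B"
definition encode :: "(nat \<Rightarrow> nat) \<Rightarrow> nat" where "encode f = (\<Sum>c<Suc lbin. f c * B ^ c)"
definition profile_code :: "nat set \<Rightarrow> nat" where "profile_code S = encode (best_weight l w S)"

text \<open>Capping at \<open>W\<close> never changes the code of an actual coalition (\<open>best_weight_le_W\<close>), but keeps
  every digit below \<open>B\<close> also for numbers that are not codes.\<close>

definition new_digit :: "nat \<Rightarrow> nat \<Rightarrow> nat \<Rightarrow> nat \<Rightarrow> nat" where
  "new_digit lk wk x c = (if c < lk then digit x c else min W (max (digit x c) (digit x (c - lk) + wk)))"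
definition add_agent_code :: "nat \<Rightarrow> nat \<Rightarrow> nat" where
  "add_agent_code k x = encode (new_digit (l k) (w k) x)"
definition num_coalitions :: "nat set \<Rightarrow> nat \<Rightarrow> nat \<Rightarrow> nat" where
  "num_coalitions P s x = card {S. S \<subseteq> P \<and> card S = s \<and> profile_code S = x}"

lemma n_pos: "1 \<le> n" using irange by auto

lemma l_bounds: "k \<in> {1..n} \<Longrightarrow> 0 < l k \<and> l k \<le> lbin"
  using valid unfolding valid_knapsack_def by auto

lemma lbin_pos: "1 \<le> lbin" using l_bounds[OF irange] by auto

definition "max_ratio = (MAX k\<in>{1..n}. real (w k) / real (l k))"

lemma max_ratio_ge: "k \<in> {1..n} \<Longrightarrow> real (w k) / real (l k) \<le> max_ratio"
  unfolding max_ratio_def by (rule Max_ge) auto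

lemma max_ratio_nonneg: "0 \<le> max_ratio"
  using max_ratio_ge[OF irange] by (meson divide_nonneg_nonneg of_nat_0_le_iff order_trans)

lemma w_max_eq_W: "real_of_int (w_max n l w lbin) = real W"
proof -
  have "0 \<le> real lbin * max_ratio" using max_ratio_nonneg by simp
  then have "0 \<le> w_max n l w lbin" unfolding w_max_def max_ratio_def[symmetric] by simp
  then show ?thesis unfolding W_def by simp
qed

lemma max_ratio_le_W: "real lbin * max_ratio \<le> real W"
  using le_of_int_ceiling[of "real lbin * max_ratio"] w_max_eq_W
  unfolding w_max_def max_ratio_def[symmetric] by simp

lemma B_pos: "0 < B" unfolding B_def by simp

lemma best_weight_le_W:
  assumes S: "S \<subseteq> {1..n}" and c: "c \<le> lbin" shows "best_weight l w S c \<le> W"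
proof -
  obtain S' where S': "S' \<subseteq> S" "(\<Sum>k\<in>S'. l k) \<le> c" "best_weight l w S c = (\<Sum>k\<in>S'. w k)"
    using best_weight_obtain[OF finite_subset[OF S finite_atLeastAtMost]] by blast
  have "real (\<Sum>k\<in>S'. w k) \<le> (\<Sum>k\<in>S'. real (l k) * max_ratio)"
    unfolding of_nat_sum
  proof (rule sum_mono)
    fix k assume "k \<in> S'"
    then have k: "k \<in> {1..n}" using S S' by auto
    have "real (w k) = real (l k) * (real (w k) / real (l k))" using l_bounds[OF k] by simp
    also have "\<dots> \<le> real (l k) * max_ratio" using max_ratio_ge[OF k] by (intro mult_left_mono) auto
    finally show "real (w k) \<le> real (l k) * max_ratio" .
  qed
  also have "\<dots> = real (\<Sum>k\<in>S'. l k) * max_ratio" by (simp add: sum_distrib_right)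
  also have "\<dots> \<le> real lbin * max_ratio"
  proof -
    have "real (\<Sum>k\<in>S'. l k) \<le> real lbin" using S'(2) c by linarith
    then show ?thesis using max_ratio_nonneg by (intro mult_right_mono) auto
  qed
  also have "\<dots> \<le> real W" by (rule max_ratio_le_W)
  finally show ?thesis unfolding S'(3) by (simp only: of_nat_le_iff)
qed

lemma encode_less: "(\<And>c. c \<le> lbin \<Longrightarrow> f c < B) \<Longrightarrow> encode f < Q"
  unfolding encode_def Q_def by (rule digit_expansion_less) auto

lemma digit_encode: "(\<And>c. c \<le> lbin \<Longrightarrow> f c < B) \<Longrightarrow> c \<le> lbin \<Longrightarrow> digit (encode f) c = f c"
  unfolding encode_def digit_def by (rule digit_expansion_digit) auto

lemma digit_less: "digit x c < B" unfolding digit_def using B_pos by simp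

lemma new_digit_less: "new_digit lk wk x c < B"
  unfolding new_digit_def using digit_less[of x c] unfolding B_def by auto

lemma add_agent_code_less: "add_agent_code k x < Q"
  unfolding add_agent_code_def by (rule encode_less) (rule new_digit_less)

lemma digit_add_agent_code: "c \<le> lbin \<Longrightarrow> digit (add_agent_code k x) c = new_digit (l k) (w k) x c"
  unfolding add_agent_code_def by (rule digit_encode) (auto intro: new_digit_less)

lemma best_weight_less_B: "S \<subseteq> {1..n} \<Longrightarrow> c \<le> lbin \<Longrightarrow> best_weight l w S c < B"
  using best_weight_le_W unfolding B_def by (simp add: le_imp_less_Suc)

lemma profile_code_less: "S \<subseteq> {1..n} \<Longrightarrow> profile_code S < Q"
  unfolding profile_code_def by (rule encode_less) (rule best_weight_less_B)

lemma digit_profile_code: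
  "S \<subseteq> {1..n} \<Longrightarrow> c \<le> lbin \<Longrightarrow> digit (profile_code S) c = best_weight l w S c"
  unfolding profile_code_def by (rule digit_encode[OF best_weight_less_B])

lemma profile_code_insert:
  assumes S: "S \<subseteq> {1..n}" and k: "k \<in> {1..n}" "k \<notin> S"
  shows "profile_code (insert k S) = add_agent_code k (profile_code S)"
proof -
  have "best_weight l w (insert k S) c = new_digit (l k) (w k) (profile_code S) c" if c: "c \<le> lbin" for c
  proof -
    have le: "best_weight l w (insert k S) c \<le> W" using S k c by (intro best_weight_le_W) auto
    have d: "digit (profile_code S) c = best_weight l w S c"
      "digit (profile_code S) (c - l k) = best_weight l w S (c - l k)"
      using S c by (simp_all add: digit_profile_code)
    show ?thesis
      unfolding new_digit_def d using best_weight_insert[OF finite_subset[OF S finite_atLeastAtMost] k(2)] le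
      by (auto simp: max_def min_def)
  qed
  then show ?thesis unfolding add_agent_code_def profile_code_def[of "insert k S"] encode_def
    by (intro sum.cong) (auto simp: profile_code_def)
qed

lemma profile_code_empty: "profile_code {} = 0"
  unfolding profile_code_def encode_def best_weight_empty by simp

lemma num_coalitions_empty: "num_coalitions {} s x = (if s = 0 \<and> x = 0 then 1 else 0)"
proof -
  have "{S. S \<subseteq> {} \<and> card S = s \<and> profile_code S = x} = (if s = 0 \<and> x = 0 then {{}} else {})"
    using profile_code_empty by auto
  then show ?thesis unfolding num_coalitions_def by simp
qed

lemma num_coalitions_insert_0:
  assumes "finite P" shows "num_coalitions (insert k P) 0 x = num_coalitions P 0 x"
proof -
  have "{S. S \<subseteq> A \<and> card S = 0 \<and> profile_code S = x} = {S. S = {} \<and> profile_code S = x}" if "finite A" for A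
    using that by (auto dest: finite_subset)
  then show ?thesis unfolding num_coalitions_def using assms by simp
qed

lemma coalitions_insert_Suc:
  assumes P: "P \<subseteq> {1..n}" and k: "k \<in> {1..n}" "k \<notin> P"
  shows "{S. S \<subseteq> insert k P \<and> card S = Suc s \<and> profile_code S = y}
           = {S. S \<subseteq> P \<and> card S = Suc s \<and> profile_code S = y}
             \<union> insert k ` {S. S \<subseteq> P \<and> card S = s \<and> add_agent_code k (profile_code S) = y}"
    (is "?L = ?A \<union> insert k ` ?C")
proof (intro equalityI subsetI)
  fix S assume S: "S \<in> ?L"
  show "S \<in> ?A \<union> insert k ` ?C"
  proof (cases "k \<in> S")
    case True
    define S' where "S' = S - {k}"
    have S': "S' \<subseteq> P" "k \<notin> S'" "S = insert k S'" using S True k(2) unfolding S'_def by auto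
    have "finite S'" using S'(1) P finite_subset[of S' "{1..n}"] by auto
    then have "card S' = s" using S S' by auto
    moreover have "add_agent_code k (profile_code S') = y"
      using S S' P k(1) profile_code_insert[of S' k] by auto
    ultimately have "S' \<in> ?C" using S'(1) by blast
    then show ?thesis using S'(3) by blast
  next
    case False
    then show ?thesis using S by auto
  qed
next
  fix S assume "S \<in> ?A \<union> insert k ` ?C"
  then show "S \<in> ?L"
  proof
    assume "S \<in> insert k ` ?C"
    then obtain S' where S': "S' \<in> ?C" "S = insert k S'" by auto
    have S'P: "S' \<subseteq> P" "k \<notin> S'" using S'(1) k(2) by auto
    have "finite S'" using S'P P finite_subset[of S' "{1..n}"] by auto
    moreover have "profile_code S = y" using S' S'P P k(1) profile_code_insert[of S' k] by auto
    ultimately show ?thesis using S' S'P by auto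
  qed auto
qed

lemma num_coalitions_insert_Suc:
  assumes P: "P \<subseteq> {1..n}" and k: "k \<in> {1..n}" "k \<notin> P"
  shows "num_coalitions (insert k P) (Suc s) y
           = num_coalitions P (Suc s) y + (\<Sum>x<Q. if add_agent_code k x = y then num_coalitions P s x else 0)"
proof -
  define A where "A = {S. S \<subseteq> P \<and> card S = Suc s \<and> profile_code S = y}"
  define C where "C = {S. S \<subseteq> P \<and> card S = s \<and> add_agent_code k (profile_code S) = y}"
  have finP: "finite P" using P finite_subset by blast
  have fA: "finite A" and fC: "finite C"
    unfolding A_def C_def using finP by (auto intro: finite_subset[of _ "Pow P"])
  have disj: "A \<inter> insert k ` C = {}" unfolding A_def using k(2) by auto
  have inj: "inj_on (insert k) C"
  proof (rule inj_onI)
    fix X Y assume "X \<in> C" "Y \<in> C" "insert k X = insert k Y"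
    moreover have "k \<notin> X" "k \<notin> Y" using \<open>X \<in> C\<close> \<open>Y \<in> C\<close> k(2) unfolding C_def by auto
    ultimately show "X = Y" by (metis Diff_insert_absorb)
  qed
  have "num_coalitions (insert k P) (Suc s) y = card A + card C"
    unfolding num_coalitions_def coalitions_insert_Suc[OF assms] A_def[symmetric] C_def[symmetric]
    using card_Un_disjoint[OF fA _ disj] fC card_image[OF inj] by simp
  also have "card C = (\<Sum>x<Q. card {S\<in>C. profile_code S = x})"
    using fC P profile_code_less unfolding C_def by (intro card_eq_sum_card_fibres) auto
  also have "\<dots> = (\<Sum>x<Q. if add_agent_code k x = y then num_coalitions P s x else 0)"
  proof (rule sum.cong)
    fix x
    have "{S\<in>C. profile_code S = x}
            = (if add_agent_code k x = y then {S. S \<subseteq> P \<and> card S = s \<and> profile_code S = x} else {})"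
      unfolding C_def by auto
    then show "card {S\<in>C. profile_code S = x} = (if add_agent_code k x = y then num_coalitions P s x else 0)"
      unfolding num_coalitions_def by simp
  qed simp
  finally show ?thesis unfolding A_def num_coalitions_def .
qed

definition shapley_coeff :: "nat \<Rightarrow> real" where "shapley_coeff s = fact s * fact (n - s - 1) / fact n"

lemma marginal_contribution_eq_digits:
  assumes "S \<subseteq> {1..n}" "i \<notin> S"
  shows "knapsack_game l w lbin (S \<union> {i}) - knapsack_game l w lbin S
           = real (new_digit (l i) (w i) (profile_code S) lbin) - real (digit (profile_code S) lbin)"
proof -
  have "best_weight l w (insert i S) lbin = digit (profile_code (insert i S)) lbin"
    using assms irange by (simp add: digit_profile_code)
  also have "\<dots> = new_digit (l i) (w i) (profile_code S) lbin"
    using profile_code_insert[OF assms(1) irange assms(2)] digit_add_agent_code by simp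
  finally show ?thesis using assms by (simp add: knapsack_game_eq_best_weight digit_profile_code)
qed

lemma shapley_eq_sum_num_coalitions:
  "shapley n (knapsack_game l w lbin) i =
     (\<Sum>s<n. \<Sum>x<Q. shapley_coeff s * real (num_coalitions ({1..n} - {i}) s x)
                      * (real (new_digit (l i) (w i) x lbin) - real (digit x lbin)))"
proof -
  define P where "P = {1..n} - {i}"
  have P: "finite P" "card P < n" "\<And>S. S \<subseteq> P \<Longrightarrow> profile_code S < Q"
    unfolding P_def using irange profile_code_less by (auto simp: card_Diff_singleton)
  have "shapley n (knapsack_game l w lbin) i
          = (\<Sum>S\<in>Pow P. shapley_coeff (card S)
               * (real (new_digit (l i) (w i) (profile_code S) lbin) - real (digit (profile_code S) lbin)))"
    unfolding shapley_def P_def[symmetric] shapley_coeff_def[symmetric]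
    using marginal_contribution_eq_digits unfolding P_def by (intro sum.cong) auto
  also have "\<dots> = (\<Sum>s<n. \<Sum>x<Q. real (num_coalitions P s x)
                     * (shapley_coeff s * (real (new_digit (l i) (w i) x lbin) - real (digit x lbin))))"
    unfolding num_coalitions_def by (rule sum_Pow_group_card[OF P])
  finally show ?thesis unfolding P_def by (simp add: mult.assoc mult.left_commute)
qed

end

section \<open>Programs whose working memory starts behind the input\<close>

text \<open>Register contents are written \<open>num k\<close> rather than \<open>of_nat k\<close>, so that the simplifier keeps
  them in this form instead of distributing the embedding over arithmetic.\<close>

definition num :: "nat \<Rightarrow> rat" where "num x = of_nat x"

lemma num_add[simp]: "num a + num b = num (a + b)" unfolding num_def by simp
lemma num_mult[simp]: "num a * num b = num (a * b)" unfolding num_def by simp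
lemma num_le[simp]: "num a \<le> num b \<longleftrightarrow> a \<le> b" unfolding num_def by simp
lemma num_less[simp]: "num a < num b \<longleftrightarrow> a < b" unfolding num_def by simp
lemma num_eq[simp]: "num a = num b \<longleftrightarrow> a = b" unfolding num_def by simp
lemma num_diff[simp]: "b \<le> a \<Longrightarrow> num a - num b = num (a - b)" unfolding num_def by (simp add: of_nat_diff)
lemma num_nonneg[simp]: "0 \<le> num a" unfolding num_def by simp
lemma num_add_div_nonneg[simp]: "0 \<le> num a + num b / num c" unfolding num_def by simp
lemma addr_num[simp]: "addr (num a) = a" unfolding num_def addr_def by simp
lemma addr_num_add_div[simp]: "addr (num a + num b / num c) = a + b div c"
proof -
  have "num a + num b / num c = of_int (int a) + (of_nat b / of_nat c :: rat)" unfolding num_def by simp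
  then have "\<lfloor>num a + num b / num c\<rfloor> = int a + \<lfloor>of_nat b / of_nat c :: rat\<rfloor>" by (simp add: floor_add_int)
  then show ?thesis unfolding addr_def by (simp add: floor_divide_of_nat_eq nat_add_distrib)
qed

definition heap_addr :: "expr \<Rightarrow> expr" where
  "heap_addr e = Plus (Plus (Times (Const (num 2)) (Load (Const (num 0)))) (Const (num 3))) e"
definition LoadH :: "expr \<Rightarrow> expr" where "LoadH e = Load (heap_addr e)"
definition StoreH :: "expr \<Rightarrow> expr \<Rightarrow> com" where "StoreH e v = Store (heap_addr e) v"
definition Reg :: "nat \<Rightarrow> expr" where "Reg j = LoadH (Const (num j))"
definition SetReg :: "nat \<Rightarrow> expr \<Rightarrow> com" where "SetReg j v = StoreH (Const (num j)) v"
definition NAgents :: expr where "NAgents = Load (Const (num 0))"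
definition QueryAgent :: expr where "QueryAgent = Load (Plus (Times (Const (num 2)) NAgents) (Const (num 2)))"
definition BinSize :: expr where "BinSize = Load (Plus (Times (Const (num 2)) NAgents) (Const (num 1)))"
definition WeightOf :: "expr \<Rightarrow> expr" where "WeightOf e = Load (Plus NAgents e)"
definition Num :: "nat \<Rightarrow> expr" where "Num k = Const (num k)"

lemma ecost_heap_addr[simp]: "ecost (heap_addr e) = 7 + ecost e" unfolding heap_addr_def by simp
lemma ecost_LoadH[simp]: "ecost (LoadH e) = 8 + ecost e" unfolding LoadH_def by simp
lemma ecost_Reg[simp]: "ecost (Reg j) = 9" unfolding Reg_def by simp
lemma ecost_Num[simp]: "ecost (Num j) = 1" unfolding Num_def by simp
lemma ecost_NAgents[simp]: "ecost NAgents = 2" unfolding NAgents_def by simp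
lemma ecost_QueryAgent[simp]: "ecost QueryAgent = 7" unfolding QueryAgent_def by simp
lemma ecost_BinSize[simp]: "ecost BinSize = 7" unfolding BinSize_def by simp
lemma ecost_WeightOf[simp]: "ecost (WeightOf e) = 4 + ecost e" unfolding WeightOf_def by simp
lemma lf_cost_StoreH[simp]: "lf_cost (StoreH a e) = 8 + ecost a + ecost e" unfolding StoreH_def by simp
lemma lf_cost_SetReg[simp]: "lf_cost (SetReg j e) = 9 + ecost e" unfolding SetReg_def by simp
lemma loop_free_StoreH[simp]: "loop_free (StoreH a e)" unfolding StoreH_def by simp
lemma loop_free_SetReg[simp]: "loop_free (SetReg j e)" unfolding SetReg_def by simp
lemma eval_Num[simp]: "eval (Num k) M = num k" unfolding Num_def by simp

fun heap_stores :: "com \<Rightarrow> bool" where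
  "heap_stores Skip = True"
| "heap_stores (Seq c1 c2) = (heap_stores c1 \<and> heap_stores c2)"
| "heap_stores (If b c1 c2) = (heap_stores c1 \<and> heap_stores c2)"
| "heap_stores (Store a e) = (\<exists>j. a = heap_addr (Const (num j)))"
| "heap_stores (While b c) = False"

lemma heap_stores_SetReg[simp]: "heap_stores (SetReg j v)" unfolding SetReg_def StoreH_def by auto

lemma run_lf_if[simp]: "run_lf c (if P then M1 else M2) = (if P then run_lf c M1 else run_lf c M2)"
  by simp

context knapsack_instance begin

definition "heap_base = 2 * n + 3"
definition heap_mem :: "(nat \<Rightarrow> rat) \<Rightarrow> mem" where
  "heap_mem h = (\<lambda>r. if r < heap_base then input_mem n l w lbin i r else h (r - heap_base))"

lemma heap_mem_0: "heap_mem h 0 = num n" unfolding heap_mem_def heap_base_def input_mem_def num_def by simp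

lemma eval_NAgents[simp]: "eval NAgents (heap_mem h) = num n" unfolding NAgents_def by (simp add: heap_mem_0)

lemma eval_heap_addr[simp]: "eval (heap_addr e) (heap_mem h) = num heap_base + eval e (heap_mem h)"
  unfolding heap_addr_def by (simp add: heap_mem_0 heap_base_def)

lemma addr_heap_base: "0 \<le> q \<Longrightarrow> addr (num heap_base + q) = heap_base + addr q"
proof -
  assume q: "0 \<le> q"
  have "\<lfloor>num heap_base + q\<rfloor> = int heap_base + \<lfloor>q\<rfloor>" unfolding num_def
    by (metis floor_add_int of_int_of_nat_eq add.commute)
  then show ?thesis unfolding addr_def using q by (simp add: nat_add_distrib)
qed

lemma heap_mem_heap_base[simp]: "heap_mem h (heap_base + a) = h a" unfolding heap_mem_def by simp
lemma heap_mem_upd[simp]: "(heap_mem h)(heap_base + a := v) = heap_mem (h(a := v))"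
  unfolding heap_mem_def by (rule ext) auto

lemma eval_LoadH[simp]: "0 \<le> eval e (heap_mem h) \<Longrightarrow> eval (LoadH e) (heap_mem h) = h (addr (eval e (heap_mem h)))"
  unfolding LoadH_def by (simp add: addr_heap_base)
lemma run_lf_StoreH[simp]: "0 \<le> eval e (heap_mem h) \<Longrightarrow> run_lf (StoreH e v) (heap_mem h) = heap_mem (h(addr (eval e (heap_mem h)) := eval v (heap_mem h)))"
  unfolding StoreH_def by (simp add: addr_heap_base)
lemma eval_Reg[simp]: "eval (Reg j) (heap_mem h) = h j" unfolding Reg_def by simp
lemma run_lf_SetReg[simp]: "run_lf (SetReg j v) (heap_mem h) = heap_mem (h(j := eval v (heap_mem h)))" unfolding SetReg_def by simp

lemma heap_mem_length: "1 \<le> k \<Longrightarrow> k \<le> n \<Longrightarrow> heap_mem h k = num (l k)"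
  by (simp add: heap_mem_def heap_base_def input_mem_def num_def)
lemma heap_mem_weight: "1 \<le> k \<Longrightarrow> k \<le> n \<Longrightarrow> heap_mem h (n + k) = num (w k)"
  by (simp add: heap_mem_def heap_base_def input_mem_def num_def)
lemma heap_mem_bin: "heap_mem h (2 * n + 1) = num lbin"
  using n_pos by (simp add: heap_mem_def heap_base_def input_mem_def num_def)
lemma heap_mem_query: "heap_mem h (2 * n + 2) = num i"
  by (simp add: heap_mem_def heap_base_def input_mem_def num_def)

lemma eval_QueryAgent[simp]: "eval QueryAgent (heap_mem h) = num i"
  unfolding QueryAgent_def using heap_mem_query[of h] by simp
lemma eval_BinSize[simp]: "eval BinSize (heap_mem h) = num lbin"
  unfolding BinSize_def using heap_mem_bin[of h] by simp
lemma eval_Load_length: "eval e (heap_mem h) = num k \<Longrightarrow> 1 \<le> k \<Longrightarrow> k \<le> n \<Longrightarrow> eval (Load e) (heap_mem h) = num (l k)"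
  by (simp add: heap_mem_length)
lemma eval_WeightOf: "eval e (heap_mem h) = num k \<Longrightarrow> 1 \<le> k \<Longrightarrow> k \<le> n \<Longrightarrow> eval (WeightOf e) (heap_mem h) = num (w k)"
  unfolding WeightOf_def by (simp add: heap_mem_weight)

lemma input_mem_eq_heap_mem: "input_mem n l w lbin i = heap_mem (\<lambda>_. 0)"
  unfolding heap_mem_def heap_base_def input_mem_def by (rule ext) auto

lemma heap_stores_run: "heap_stores c \<Longrightarrow> \<exists>h'. run_lf c (heap_mem h) = heap_mem h'"
proof (induction c arbitrary: h)
  case (Store a e)
  then obtain j where "a = heap_addr (Const (num j))" by auto
  then show ?case by (auto simp add: addr_heap_base)
next
  case (Seq c1 c2)
  then obtain h1 where "run_lf c1 (heap_mem h) = heap_mem h1" by auto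
  with Seq show ?case by auto
qed auto

definition heap_of :: "mem \<Rightarrow> (nat \<Rightarrow> rat)" where "heap_of M = (\<lambda>a. M (heap_base + a))"
lemma heap_of_heap_mem[simp]: "heap_of (heap_mem h) = h" unfolding heap_of_def by simp

lemma heap_stores_heap_mem:
  "heap_stores c \<Longrightarrow> run_lf c (heap_mem h) = heap_mem (heap_of (run_lf c (heap_mem h)))"
  using heap_stores_run[of c h] by auto

definition on_heap :: "((nat \<Rightarrow> rat) \<Rightarrow> bool) \<Rightarrow> mem \<Rightarrow> bool" where
  "on_heap P M \<longleftrightarrow> M = heap_mem (heap_of M) \<and> P (heap_of M)"

lemma on_heap_heap_mem[simp]: "on_heap P (heap_mem h) \<longleftrightarrow> P h" unfolding on_heap_def by simp

lemma runs_within_While_heap: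
  assumes "P 0 h0"
    and step: "\<And>j h. j < m \<Longrightarrow> P j h \<Longrightarrow> beval bb (heap_mem h) \<and> runs_within c (heap_mem h) Bd (on_heap (P (Suc j)))"
    and fin: "\<And>h. P m h \<Longrightarrow> \<not> beval bb (heap_mem h) \<and> Qp h"
    and "m * (1 + bcost bb + Bd) + 1 + bcost bb \<le> b"
  shows "runs_within (While bb c) (heap_mem h0) b (on_heap Qp)"
proof (rule runs_within_While[where I = "\<lambda>j. on_heap (P j)" and m = m and B = Bd])
  show "on_heap (P 0) (heap_mem h0)" using assms(1) by simp
next
  fix j M assume "j < m" "on_heap (P j) M"
  then have M: "M = heap_mem (heap_of M)" "P j (heap_of M)" unfolding on_heap_def by auto
  from step[OF \<open>j < m\<close> M(2)] show "beval bb M \<and> runs_within c M Bd (on_heap (P (Suc j)))" using M(1) by metis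
next
  fix M assume "on_heap (P m) M"
  then have M: "M = heap_mem (heap_of M)" "P m (heap_of M)" unfolding on_heap_def by auto
  from fin[OF M(2)] show "\<not> beval bb M \<and> on_heap Qp M" using M(1) unfolding on_heap_def by metis
qed (use assms(4) in simp)

lemma runs_within_Seq_heap:
  assumes a1: "runs_within c1 M b1 (on_heap P)" and a2: "\<And>h. P h \<Longrightarrow> runs_within c2 (heap_mem h) b2 Qp" and a3: "b1 + b2 \<le> b"
  shows "runs_within (Seq c1 c2) M b Qp"
proof (rule runs_within_Seq[OF runs_within_mono[OF a1 order_refl] a3])
  fix M1 assume "on_heap P M1"
  then have "M1 = heap_mem (heap_of M1)" "P (heap_of M1)" unfolding on_heap_def by auto
  then show "runs_within c2 M1 b2 Qp" using a2 by metis
qed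

lemma runs_within_Seq_While_heap:
  assumes "loop_free c" "run_lf c M = heap_mem h_init" "P 0 h_init"
    and "\<And>j h. j < m \<Longrightarrow> P j h \<Longrightarrow> beval bb (heap_mem h) \<and> runs_within body (heap_mem h) Bd (on_heap (P (Suc j)))"
    and "\<And>h. P m h \<Longrightarrow> \<not> beval bb (heap_mem h) \<and> Qp h"
    and "lf_cost c + (m * (1 + bcost bb + Bd) + 1 + bcost bb) \<le> b"
  shows "runs_within (Seq c (While bb body)) M b (on_heap Qp)"
  using assms(2) runs_within_While_heap[where P = P, OF assms(3-5) order_refl]
  by (intro runs_within_Seq_loop_free[OF assms(1) _ assms(6)]) simp

end

section \<open>Recomputing a code after adding one agent\<close>

definition add_agent_body :: com where
 "add_agent_body = Seq (SetReg 9 (Times (Reg 5) (Reg 13)))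
 (Seq (SetReg 7 (Minus (LoadH (Plus (Num 24) (Divide (Reg 2) (Reg 5)))) (Times (Reg 13) (LoadH (Plus (Num 24) (Divide (Reg 2) (Reg 9)))))))
 (Seq (SetReg 8 (Reg 7))
 (Seq (If (Le (Reg 10) (Reg 3))
        (Seq (SetReg 9 (Times (Reg 6) (Reg 13)))
        (Seq (SetReg 9 (Plus (Minus (LoadH (Plus (Num 24) (Divide (Reg 2) (Reg 6)))) (Times (Reg 13) (LoadH (Plus (Num 24) (Divide (Reg 2) (Reg 9)))))) (Reg 11)))
        (Seq (If (Le (Reg 8) (Reg 9)) (SetReg 8 (Reg 9)) Skip)
        (Seq (If (Le (Reg 12) (Reg 8)) (SetReg 8 (Reg 12)) Skip)
             (SetReg 6 (Times (Reg 6) (Reg 13)))))))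
        Skip)
 (Seq (SetReg 4 (Plus (Reg 4) (Times (Reg 8) (Reg 5))))
 (Seq (SetReg 5 (Times (Reg 5) (Reg 13)))
      (SetReg 3 (Plus (Reg 3) (Num 1))))))))"

definition add_agent_init :: com where
  "add_agent_init = Seq (SetReg 3 (Num 0)) (Seq (SetReg 4 (Num 0)) (Seq (SetReg 5 (Num 1)) (SetReg 6 (Num 1))))"

definition digit_guard :: bexp where "digit_guard = Le (Reg 3) (Reg 18)"

definition add_agent_prog :: com where
  "add_agent_prog = Seq add_agent_init (While digit_guard add_agent_body)"

lemma loop_free_add_agent_body: "loop_free add_agent_body" unfolding add_agent_body_def by simp
lemma heap_stores_add_agent_body: "heap_stores add_agent_body" unfolding add_agent_body_def by simp
lemma lf_cost_add_agent_body: "lf_cost add_agent_body \<le> 500" unfolding add_agent_body_def by simp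
lemma lf_cost_add_agent_init: "lf_cost add_agent_init \<le> 50" unfolding add_agent_init_def by simp
lemma bcost_digit_guard: "bcost digit_guard = 19" unfolding digit_guard_def by simp

context knapsack_instance begin

text \<open>Layout of the working memory \<open>h\<close>. Cells 0 to 23 are registers: 0 the current agent, 1 the
  current coalition size, 2 the current code \<open>x\<close>, 3 to 9 the scratch space of \<open>add_agent_prog\<close>
  (3 the digit index \<open>j\<close>, 4 the code built so far, 5 \<open>B\<^sup>j\<close>, 6 \<open>B\<^bsup>j - l\<^sub>k\<^esup>\<close>, 7 and 8 the old and the new
  digit), 10 and 11 the length and weight of the current agent, 12 \<open>W\<close>, 13 \<open>B\<close>, 14 \<open>Q\<close>, 15 the
  maximal ratio \<open>w\<^sub>k / l\<^sub>k\<close>, 16 the Shapley sum, 17 its current coefficient, 18 \<open>l\<^sub>b\<^sub>i\<^sub>n\<close>, 19 the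
  address \<open>count_base\<close>. Cell \<open>24 + z\<close> holds \<open>z\<close> for \<open>z < Q\<close>: since an address is the floor of the
  computed value, loading cell \<open>24 + x / p\<close> yields \<open>x div p\<close>, and this is how the program rounds.
  From \<open>count_base\<close> on, cell \<open>count_base + t * Q + y\<close> counts the coalitions of size \<open>t\<close> with code
  \<open>y\<close>.\<close>

definition "count_base = 24 + Q"

definition tables_ready :: "(nat \<Rightarrow> rat) \<Rightarrow> bool" where
  "tables_ready h \<longleftrightarrow> h 18 = num lbin \<and> h 12 = num W \<and> h 13 = num B \<and> h 14 = num Q
     \<and> h 19 = num count_base \<and> (\<forall>z<Q. h (24 + z) = num z)"

text \<open>Iteration \<open>j\<close> of \<open>add_agent_body\<close> obtains digit \<open>j\<close> of \<open>x\<close> as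
  \<open>x div B\<^sup>j - B * (x div B\<^bsup>j + 1\<^esup>)\<close>.\<close>

lemma num_digit_diff[simp]: "num (x div p) - num (B * (x div (p * B))) = num (x div p mod B)"
proof -
  have "x div (p * B) = x div p div B" by (simp add: div_mult2_eq)
  then have "B * (x div (p * B)) \<le> x div p" "x div p - B * (x div (p * B)) = x div p mod B"
    by (simp_all add: minus_div_mult_eq_mod[symmetric] mult.commute)
  then show ?thesis by simp
qed

lemma digit_diff[simp]: "x div p - B * (x div (p * B)) = x div p mod B"
  by (simp add: div_mult2_eq minus_div_mult_eq_mod[symmetric] mult.commute)

definition add_agent_inv :: "(nat \<Rightarrow> rat) \<Rightarrow> nat \<Rightarrow> nat \<Rightarrow> nat \<Rightarrow> nat \<Rightarrow> (nat \<Rightarrow> rat) \<Rightarrow> bool" where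
  "add_agent_inv h x lk wk j h' \<longleftrightarrow> (\<forall>a. a \<notin> {3..9} \<longrightarrow> h' a = h a) \<and> h' 3 = num j \<and>
     h' 4 = num (\<Sum>c<j. new_digit lk wk x c * B ^ c) \<and> h' 5 = num (B ^ j) \<and> h' 6 = num (B ^ (j - lk)) \<and>
     (0 < j \<longrightarrow> h' 7 = num (digit x (j - 1)) \<and> h' 8 = num (new_digit lk wk x (j - 1)))"

definition add_agent_post :: "(nat \<Rightarrow> rat) \<Rightarrow> nat \<Rightarrow> nat \<Rightarrow> nat \<Rightarrow> (nat \<Rightarrow> rat) \<Rightarrow> bool" where
  "add_agent_post h x lk wk h' \<longleftrightarrow> (\<forall>a. a \<notin> {3..9} \<longrightarrow> h' a = h a) \<and> h' 4 = num (encode (new_digit lk wk x))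
     \<and> h' 7 = num (digit x lbin) \<and> h' 8 = num (new_digit lk wk x lbin)"

lemma add_agent_body_step:
  assumes pre: "tables_ready h" "h 2 = num x" "x < Q" "h 10 = num lk" "h 11 = num wk"
    and inv: "add_agent_inv h x lk wk j h'"
  shows "add_agent_inv h x lk wk (Suc j) (heap_of (run_lf add_agent_body (heap_mem h')))"
proof -
  have fr: "\<And>a. a \<notin> {3..9} \<Longrightarrow> h' a = h a" using inv unfolding add_agent_inv_def by auto
  have v: "h' 18 = num lbin" "h' 12 = num W" "h' 13 = num B" "h' 14 = num Q" "h' 2 = num x"
    "h' 10 = num lk" "h' 11 = num wk"
    using pre fr unfolding tables_ready_def by auto
  have tab: "h' (24 + x div p) = num (x div p)" for p
  proof -
    have "x div p < Q" using pre(3) by (meson div_le_dividend le_less_trans)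
    then show ?thesis using pre(1) fr[of "24 + x div p"] unfolding tables_ready_def by auto
  qed
  have c: "h' 3 = num j" "h' 4 = num (\<Sum>c<j. new_digit lk wk x c * B ^ c)" "h' 5 = num (B ^ j)"
    "h' 6 = num (B ^ (j - lk))"
    using inv unfolding add_agent_inv_def by auto
  show ?thesis
    unfolding add_agent_body_def add_agent_inv_def
    using fr v tab c B_pos
    by (simp add: digit_def) (simp add: new_digit_def digit_def Suc_diff_le min_def max_def)
qed

definition "add_agent_cost = 600 * (lbin + 2)"

lemma add_agent_prog_correct:
  assumes pre: "tables_ready h" "h 2 = num x" "x < Q" "h 10 = num lk" "h 11 = num wk"
  shows "runs_within add_agent_prog (heap_mem h) add_agent_cost (on_heap (add_agent_post h x lk wk))"
  unfolding add_agent_prog_def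
proof (rule runs_within_Seq_While_heap[where P = "add_agent_inv h x lk wk" and m = "Suc lbin" and Bd = 500
      and h_init = "h(3 := num 0, 4 := num 0, 5 := num 1, 6 := num 1)"])
  have lb: "h 18 = num lbin" using pre unfolding tables_ready_def by auto
  fix j h' assume j: "j < Suc lbin" and inv: "add_agent_inv h x lk wk j h'"
  have "beval digit_guard (heap_mem h')" using inv lb j unfolding add_agent_inv_def digit_guard_def by simp
  moreover have "runs_within add_agent_body (heap_mem h') 500 (on_heap (add_agent_inv h x lk wk (Suc j)))"
    using add_agent_body_step[OF pre inv] lf_cost_add_agent_body
    by (intro runs_within_loop_free[OF loop_free_add_agent_body])
      (subst heap_stores_heap_mem[OF heap_stores_add_agent_body], simp_all)
  ultimately show "beval digit_guard (heap_mem h')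
      \<and> runs_within add_agent_body (heap_mem h') 500 (on_heap (add_agent_inv h x lk wk (Suc j)))" ..
next
  have lb: "h 18 = num lbin" using pre unfolding tables_ready_def by auto
  fix h' assume "add_agent_inv h x lk wk (Suc lbin) h'"
  then show "\<not> beval digit_guard (heap_mem h') \<and> add_agent_post h x lk wk h'"
    using lb unfolding add_agent_inv_def add_agent_post_def digit_guard_def encode_def by auto
qed (use lf_cost_add_agent_init in \<open>auto simp: add_agent_init_def add_agent_inv_def add_agent_cost_def bcost_digit_guard\<close>)

lemma tables_ready_frame:
  "tables_ready h \<Longrightarrow> \<forall>a. a \<notin> {3..9} \<longrightarrow> h' a = h a \<Longrightarrow> tables_ready h'"
  unfolding tables_ready_def by auto

lemma tables_ready_upd:
  "a < 24 \<Longrightarrow> a \<notin> {12, 13, 14, 18, 19} \<Longrightarrow> tables_ready h \<Longrightarrow> tables_ready (h(a := v))"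
  unfolding tables_ready_def by auto

lemma tables_ready_upd_count:
  "count_base \<le> a \<Longrightarrow> tables_ready h \<Longrightarrow> tables_ready (h(a := v))"
  unfolding tables_ready_def count_base_def by auto

end

section \<open>Updating one level of the count table\<close>

definition target_cell :: expr where
  "target_cell = Plus (Plus (Reg 19) (Times (Reg 1) (Reg 14))) (Reg 4)"
definition source_cell :: expr where
  "source_cell = Plus (Plus (Reg 19) (Times (Minus (Reg 1) (Num 1)) (Reg 14))) (Reg 2)"
definition level_rest :: com where
  "level_rest = Seq (StoreH target_cell (Plus (LoadH target_cell) (LoadH source_cell))) (SetReg 2 (Plus (Reg 2) (Num 1)))"
definition level_body :: com where "level_body = Seq add_agent_prog level_rest"
definition code_guard :: bexp where "code_guard = Not (Le (Reg 14) (Reg 2))"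
definition level_prog :: com where "level_prog = Seq (SetReg 2 (Num 0)) (While code_guard level_body)"

lemma loop_free_level_rest: "loop_free level_rest" unfolding level_rest_def by simp
lemma lf_cost_level_rest: "lf_cost level_rest \<le> 200" unfolding level_rest_def target_cell_def source_cell_def by simp
lemma bcost_code_guard: "bcost code_guard = 20" unfolding code_guard_def by simp

context knapsack_instance begin

definition count_table :: "(nat \<Rightarrow> rat) \<Rightarrow> (nat \<Rightarrow> nat \<Rightarrow> nat) \<Rightarrow> bool" where
  "count_table h F \<longleftrightarrow> (\<forall>t\<le>n. \<forall>y<Q. h (count_base + t * Q + y) = num (F t y))"

lemma count_cell_eq_iff:
  "y < Q \<Longrightarrow> y' < Q \<Longrightarrow> count_base + t * Q + y = count_base + t' * Q + y' \<longleftrightarrow> t = t' \<and> y = y'"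
proof
  assume y: "y < Q" "y' < Q" and "count_base + t * Q + y = count_base + t' * Q + y'"
  then have e: "t * Q + y = t' * Q + y'" by simp
  then have "(t * Q + y) div Q = (t' * Q + y') div Q" by simp
  then have "t = t'" using y by simp
  then show "t = t' \<and> y = y'" using e by simp
qed simp

lemma count_table_frame:
  "count_table h F \<Longrightarrow> \<forall>a. a \<notin> {3..9} \<longrightarrow> h' a = h a \<Longrightarrow> count_table h' F"
  unfolding count_table_def count_base_def by auto

lemma count_table_upd: "a < 24 \<Longrightarrow> count_table h F \<Longrightarrow> count_table (h(a := v)) F"
  unfolding count_table_def count_base_def by auto

lemma count_table_cong:
  "(\<And>t y. t \<le> n \<Longrightarrow> y < Q \<Longrightarrow> F t y = F' t y) \<Longrightarrow> count_table h F \<Longrightarrow> count_table h F'"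
  unfolding count_table_def by auto

lemma count_table_upd_cell:
  assumes "count_table h F" "y0 < Q"
  shows "count_table (h(count_base + t0 * Q + y0 := num v)) (\<lambda>t y. if t = t0 \<and> y = y0 then v else F t y)"
  using assms count_cell_eq_iff[OF _ assms(2)] unfolding count_table_def by auto

text \<open>Adding agent \<open>k\<close> to \<open>P\<close> updates the counts of size \<open>t\<close> in place from those of size \<open>t - 1\<close>.
  The sizes are processed from \<open>n\<close> down to \<open>1\<close>, so that the counts of size \<open>t - 1\<close> still refer
  to \<open>P\<close> while size \<open>t\<close> is updated; \<open>level_count k P t j\<close> is the table after the codes below \<open>j\<close>
  have been processed at size \<open>t\<close>.\<close>

definition level_count :: "nat \<Rightarrow> nat set \<Rightarrow> nat \<Rightarrow> nat \<Rightarrow> nat \<Rightarrow> nat \<Rightarrow> nat" where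
  "level_count k P t j t' y =
     (if t < t' then num_coalitions (insert k P) t' y
      else if t' = t then num_coalitions P t y + (\<Sum>x<j. if add_agent_code k x = y then num_coalitions P (t - 1) x else 0)
      else num_coalitions P t' y)"

definition level_inv :: "nat \<Rightarrow> nat set \<Rightarrow> nat \<Rightarrow> nat \<Rightarrow> (nat \<Rightarrow> rat) \<Rightarrow> bool" where
  "level_inv k P t j h \<longleftrightarrow> tables_ready h \<and> h 0 = num k \<and> h 10 = num (l k) \<and> h 11 = num (w k)
     \<and> h 1 = num t \<and> h 2 = num j \<and> count_table h (level_count k P t j)"

lemma level_count_Suc:
  "t' \<le> n \<Longrightarrow> y < Q \<Longrightarrow> level_count k P t (Suc j) t' y
     = (if t' = t \<and> y = add_agent_code k j then level_count k P t j t y + num_coalitions P (t - 1) j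
        else level_count k P t j t' y)"
  unfolding level_count_def by auto

lemma level_inv_step:
  assumes inv: "level_inv k P t j h" and t: "1 \<le> t" "t \<le> n" and j: "j < Q"
    and fr: "\<forall>a. a \<notin> {3..9} \<longrightarrow> h1 a = h a"
  defines "c \<equiv> count_base + t * Q + add_agent_code k j"
  shows "level_inv k P t (Suc j) (h1(c := h1 c + h1 (count_base + (t - 1) * Q + j), 2 := num (Suc j)))"
proof -
  have ready: "tables_ready h1" and table: "count_table h1 (level_count k P t j)"
    using inv fr tables_ready_frame count_table_frame unfolding level_inv_def by blast+
  have code: "add_agent_code k j < Q" by (rule add_agent_code_less)
  define v where "v = level_count k P t j t (add_agent_code k j) + num_coalitions P (t - 1) j"
  have "h1 c + h1 (count_base + (t - 1) * Q + j) = num v"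
    using table code t j unfolding c_def v_def count_table_def level_count_def by auto
  moreover have "count_table (h1(c := num v)) (\<lambda>t' y. if t' = t \<and> y = add_agent_code k j then v else level_count k P t j t' y)"
    unfolding c_def by (rule count_table_upd_cell[OF table code])
  then have "count_table (h1(c := num v)) (level_count k P t (Suc j))"
    by (rule count_table_cong[rotated]) (simp add: level_count_Suc v_def)
  ultimately have table': "count_table (h1(c := h1 c + h1 (count_base + (t - 1) * Q + j))) (level_count k P t (Suc j))"
    by simp
  define h2 where "h2 = h1(c := h1 c + h1 (count_base + (t - 1) * Q + j))"
  have c: "count_base \<le> c" "24 \<le> c" unfolding c_def count_base_def by simp_all
  have "h2 a = h1 a" if "a < 24" for a using that c(2) unfolding h2_def by simp
  with fr have h2: "h2 0 = h 0" "h2 1 = h 1" "h2 10 = h 10" "h2 11 = h 11" by simp_all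
  have "tables_ready (h2(2 := num (Suc j)))"
    using tables_ready_upd_count[OF c(1) ready] unfolding h2_def by (rule tables_ready_upd[rotated 2]) simp_all
  moreover have "count_table (h2(2 := num (Suc j))) (level_count k P t (Suc j))"
    using table' unfolding h2_def by (rule count_table_upd[rotated]) simp
  ultimately have "level_inv k P t (Suc j) (h2(2 := num (Suc j)))"
    using inv h2 unfolding level_inv_def by simp
  then show ?thesis unfolding h2_def .
qed

lemma run_lf_level_rest:
  assumes "h1 1 = num t" "1 \<le> t" "h1 14 = num Q" "h1 19 = num count_base" "h1 4 = num y" "h1 2 = num j"
  shows "run_lf level_rest (heap_mem h1)
           = heap_mem (h1(count_base + t * Q + y := h1 (count_base + t * Q + y) + h1 (count_base + (t - 1) * Q + j),
                          2 := num (Suc j)))"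
  using assms unfolding level_rest_def target_cell_def source_cell_def count_base_def by simp

lemma level_body_correct:
  assumes inv: "level_inv k P t j h" and t: "1 \<le> t" "t \<le> n" and j: "j < Q"
  shows "runs_within level_body (heap_mem h) (add_agent_cost + 200) (on_heap (level_inv k P t (Suc j)))"
  unfolding level_body_def
proof (rule runs_within_Seq_heap)
  have h: "tables_ready h" "h 2 = num j" "h 10 = num (l k)" "h 11 = num (w k)" "h 1 = num t"
    using inv unfolding level_inv_def by auto
  then show "runs_within add_agent_prog (heap_mem h) add_agent_cost (on_heap (add_agent_post h j (l k) (w k)))"
    using j by (intro add_agent_prog_correct) auto
  fix h1 assume post: "add_agent_post h j (l k) (w k) h1"
  then have fr: "\<forall>a. a \<notin> {3..9} \<longrightarrow> h1 a = h a" unfolding add_agent_post_def by blast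
  have "h1 4 = num (add_agent_code k j)" using post unfolding add_agent_post_def add_agent_code_def by blast
  moreover have "h1 1 = num t" "h1 14 = num Q" "h1 19 = num count_base" "h1 2 = num j"
    using fr h unfolding tables_ready_def by auto
  ultimately have "run_lf level_rest (heap_mem h1)
      = heap_mem (h1(count_base + t * Q + add_agent_code k j := h1 (count_base + t * Q + add_agent_code k j)
                       + h1 (count_base + (t - 1) * Q + j), 2 := num (Suc j)))"
    using t by (intro run_lf_level_rest) auto
  then show "runs_within level_rest (heap_mem h1) 200 (on_heap (level_inv k P t (Suc j)))"
    using level_inv_step[OF inv t j fr] lf_cost_level_rest
    by (intro runs_within_loop_free[OF loop_free_level_rest]) simp_all
qed simp

definition "cost_digits = lbin + 2"
definition "cost_codes = Suc Q * cost_digits"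
definition "cost_levels = Suc n * cost_codes"
definition "cost_total = Suc n * cost_levels"

lemma cost_mono: "3 \<le> cost_digits" "cost_digits \<le> cost_codes" "cost_codes \<le> cost_levels" "cost_levels \<le> cost_total"
  using lbin_pos unfolding cost_digits_def cost_codes_def cost_levels_def cost_total_def by auto

lemma level_prog_correct:
  assumes inv: "level_inv k P t 0 (h(2 := num 0))" and t: "1 \<le> t" "t \<le> n"
  shows "runs_within level_prog (heap_mem h) (800 * cost_codes) (on_heap (level_inv k P t Q))"
  unfolding level_prog_def
proof (rule runs_within_Seq_While_heap[where P = "level_inv k P t" and m = Q and Bd = "add_agent_cost + 200"
      and h_init = "h(2 := num 0)"])
  fix j h' assume j: "j < Q" and inv': "level_inv k P t j h'"
  have "beval code_guard (heap_mem h')"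
    using inv' j unfolding level_inv_def tables_ready_def code_guard_def by simp
  then show "beval code_guard (heap_mem h')
      \<and> runs_within level_body (heap_mem h') (add_agent_cost + 200) (on_heap (level_inv k P t (Suc j)))"
    using level_body_correct[OF inv' t j] by simp
next
  fix h' assume "level_inv k P t Q h'"
  then show "\<not> beval code_guard (heap_mem h') \<and> level_inv k P t Q h'"
    unfolding level_inv_def tables_ready_def code_guard_def by simp
next
  have "Q * (1 + bcost code_guard + (add_agent_cost + 200)) + 1 + bcost code_guard \<le> Suc Q * (700 * cost_digits)"
    using cost_mono unfolding bcost_code_guard add_agent_cost_def cost_digits_def by (intro loop_cost_le) auto
  then show "lf_cost (SetReg 2 (Num 0)) + (Q * (1 + bcost code_guard + (add_agent_cost + 200)) + 1 + bcost code_guard)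
      \<le> 800 * cost_codes"
    using cost_mono unfolding cost_codes_def by simp
qed (use inv in simp_all)

end

section \<open>Adding the agents one by one\<close>

definition level_guard :: bexp where "level_guard = Le (Num 1) (Reg 1)"
definition insert_body :: com where "insert_body = Seq level_prog (SetReg 1 (Minus (Reg 1) (Num 1)))"
definition insert_prog :: com where "insert_prog = Seq (SetReg 1 NAgents) (While level_guard insert_body)"
definition query_guard :: bexp where "query_guard = And (Le (Reg 0) QueryAgent) (Le QueryAgent (Reg 0))"
definition agents_body :: com where
  "agents_body = Seq (If query_guard Skip (Seq (SetReg 10 (Load (Reg 0))) (Seq (SetReg 11 (WeightOf (Reg 0))) insert_prog)))
                     (SetReg 0 (Plus (Reg 0) (Num 1)))"
definition agents_guard :: bexp where "agents_guard = Le (Reg 0) NAgents"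
definition agents_prog :: com where "agents_prog = Seq (SetReg 0 (Num 1)) (While agents_guard agents_body)"

lemma bcost_level_guard: "bcost level_guard = 11" unfolding level_guard_def by simp
lemma bcost_query_guard: "bcost query_guard = 35" unfolding query_guard_def by simp
lemma bcost_agents_guard: "bcost agents_guard = 12" unfolding agents_guard_def by simp

context knapsack_instance begin

definition partly_inserted :: "nat \<Rightarrow> nat set \<Rightarrow> nat \<Rightarrow> nat \<Rightarrow> nat \<Rightarrow> nat" where
  "partly_inserted k P t t' y = (if t < t' then num_coalitions (insert k P) t' y else num_coalitions P t' y)"

definition insert_inv :: "nat \<Rightarrow> nat set \<Rightarrow> nat \<Rightarrow> (nat \<Rightarrow> rat) \<Rightarrow> bool" where
  "insert_inv k P t h \<longleftrightarrow> tables_ready h \<and> h 0 = num k \<and> h 10 = num (l k) \<and> h 11 = num (w k)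
     \<and> h 1 = num t \<and> count_table h (partly_inserted k P t)"

lemma level_count_0: "level_count k P t 0 = partly_inserted k P t"
  unfolding level_count_def partly_inserted_def by (intro ext) auto

lemma level_count_Q:
  assumes "P \<subseteq> {1..n}" "k \<in> {1..n}" "k \<notin> P" "1 \<le> t"
  shows "level_count k P t Q t' y = partly_inserted k P (t - 1) t' y"
  using num_coalitions_insert_Suc[OF assms(1-3), of "t - 1" y] assms(4)
  unfolding level_count_def partly_inserted_def by auto

lemma insert_body_correct:
  assumes inv: "insert_inv k P (Suc t) h" and t: "t < n"
    and P: "P \<subseteq> {1..n}" and k: "k \<in> {1..n}" "k \<notin> P"
  shows "runs_within insert_body (heap_mem h) (800 * cost_codes + 20) (on_heap (insert_inv k P t))"
  unfolding insert_body_def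
proof (rule runs_within_Seq_heap)
  show "runs_within level_prog (heap_mem h) (800 * cost_codes) (on_heap (level_inv k P (Suc t) Q))"
    by (rule level_prog_correct)
      (use inv t in \<open>auto simp: insert_inv_def level_inv_def level_count_0 intro: tables_ready_upd count_table_upd\<close>)
  fix h' assume inv': "level_inv k P (Suc t) Q h'"
  have "count_table h' (level_count k P (Suc t) Q)" using inv' unfolding level_inv_def by simp
  then have "count_table h' (partly_inserted k P t)"
    by (rule count_table_cong[rotated]) (simp add: level_count_Q[OF P k])
  then have "count_table (h'(1 := num t)) (partly_inserted k P t)" by (rule count_table_upd[rotated]) simp
  moreover have "run_lf (SetReg 1 (Minus (Reg 1) (Num 1))) (heap_mem h') = heap_mem (h'(1 := num t))"
    using inv' unfolding level_inv_def by simp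
  ultimately show "runs_within (SetReg 1 (Minus (Reg 1) (Num 1))) (heap_mem h') 20 (on_heap (insert_inv k P t))"
    using inv' unfolding level_inv_def insert_inv_def
    by (intro runs_within_loop_free) (auto intro: tables_ready_upd)
qed simp

lemma insert_prog_correct:
  assumes h: "tables_ready h" "h 0 = num k" "h 10 = num (l k)" "h 11 = num (w k)"
      "count_table h (num_coalitions P)"
    and P: "P \<subseteq> {1..n}" and k: "k \<in> {1..n}" "k \<notin> P"
  shows "runs_within insert_prog (heap_mem h) (1000 * cost_levels)
           (on_heap (\<lambda>h'. tables_ready h' \<and> h' 0 = num k \<and> count_table h' (num_coalitions (insert k P))))"
  unfolding insert_prog_def
proof (rule runs_within_Seq_While_heap[where P = "\<lambda>j. insert_inv k P (n - j)" and m = n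
      and Bd = "800 * cost_codes + 20" and h_init = "h(1 := num n)"])
  have "count_table h (partly_inserted k P n)"
    by (rule count_table_cong[OF _ h(5)]) (simp add: partly_inserted_def)
  then show "insert_inv k P (n - 0) (h(1 := num n))"
    using h unfolding insert_inv_def by (auto intro!: tables_ready_upd count_table_upd)
next
  fix j h' assume j: "j < n" and inv: "insert_inv k P (n - j) h'"
  have "n - j = Suc (n - Suc j)" using j by simp
  then show "beval level_guard (heap_mem h')
      \<and> runs_within insert_body (heap_mem h') (800 * cost_codes + 20) (on_heap (insert_inv k P (n - Suc j)))"
    using inv insert_body_correct[of k P "n - Suc j" h', OF _ _ P k] j
    unfolding insert_inv_def level_guard_def by auto
next
  fix h' assume inv: "insert_inv k P (n - n) h'"
  have "partly_inserted k P 0 t y = num_coalitions (insert k P) t y" for t y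
    using num_coalitions_insert_0[OF finite_subset[OF P finite_atLeastAtMost]]
    unfolding partly_inserted_def by auto
  moreover have "count_table h' (partly_inserted k P 0)" using inv unfolding insert_inv_def by simp
  ultimately have "count_table h' (num_coalitions (insert k P))" by (rule count_table_cong)
  then show "\<not> beval level_guard (heap_mem h')
      \<and> tables_ready h' \<and> h' 0 = num k \<and> count_table h' (num_coalitions (insert k P))"
    using inv unfolding insert_inv_def level_guard_def by simp
next
  have "n * (1 + bcost level_guard + (800 * cost_codes + 20)) + 1 + bcost level_guard \<le> Suc n * (900 * cost_codes)"
    using cost_mono unfolding bcost_level_guard by (intro loop_cost_le) auto
  then show "lf_cost (SetReg 1 NAgents) + (n * (1 + bcost level_guard + (800 * cost_codes + 20)) + 1 + bcost level_guard)
      \<le> 1000 * cost_levels"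
    using cost_mono unfolding cost_levels_def by simp
qed simp_all

definition agents_inv :: "nat \<Rightarrow> (nat \<Rightarrow> rat) \<Rightarrow> bool" where
  "agents_inv j h \<longleftrightarrow> tables_ready h \<and> h 0 = num (Suc j) \<and> count_table h (num_coalitions ({1..j} - {i}))"

definition agents_mid :: "nat \<Rightarrow> (nat \<Rightarrow> rat) \<Rightarrow> bool" where
  "agents_mid j h \<longleftrightarrow> tables_ready h \<and> h 0 = num (Suc j) \<and> count_table h (num_coalitions ({1..Suc j} - {i}))"

lemma insert_agent_correct:
  assumes inv: "agents_inv j h" and j: "j < n" and ki: "Suc j \<noteq> i"
  shows "runs_within (Seq (SetReg 10 (Load (Reg 0))) (Seq (SetReg 11 (WeightOf (Reg 0))) insert_prog))
           (heap_mem h) (41 + 1000 * cost_levels) (on_heap (agents_mid j))"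
proof -
  define h1 where "h1 = h(10 := num (l (Suc j)), 11 := num (w (Suc j)))"
  have run: "run_lf (SetReg 11 (WeightOf (Reg 0))) (run_lf (SetReg 10 (Load (Reg 0))) (heap_mem h)) = heap_mem h1"
  proof -
    have "eval (Load (Reg 0)) (heap_mem h) = num (l (Suc j))"
      using inv j unfolding agents_inv_def by (intro eval_Load_length) auto
    moreover have "eval (WeightOf (Reg 0)) (heap_mem (h(10 := num (l (Suc j))))) = num (w (Suc j))"
      using inv j unfolding agents_inv_def by (intro eval_WeightOf) auto
    ultimately show ?thesis unfolding h1_def by simp
  qed
  have "runs_within insert_prog (heap_mem h1) (1000 * cost_levels)
      (on_heap (\<lambda>h'. tables_ready h' \<and> h' 0 = num (Suc j) \<and> count_table h' (num_coalitions (insert (Suc j) ({1..j} - {i})))))"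
    by (rule insert_prog_correct)
      (use inv j in \<open>auto simp: agents_inv_def h1_def intro!: tables_ready_upd count_table_upd\<close>)
  moreover have "insert (Suc j) ({1..j} - {i}) = {1..Suc j} - {i}" using ki by auto
  ultimately have "runs_within insert_prog (heap_mem h1) (1000 * cost_levels) (on_heap (agents_mid j))"
    unfolding agents_mid_def[abs_def] by simp
  then have "runs_within (Seq (SetReg 11 (WeightOf (Reg 0))) insert_prog) (run_lf (SetReg 10 (Load (Reg 0))) (heap_mem h))
      (22 + 1000 * cost_levels) (on_heap (agents_mid j))"
    using run by (intro runs_within_Seq_loop_free[where b_rest = "1000 * cost_levels"]) simp_all
  then show ?thesis by (rule runs_within_Seq_loop_free[rotated]) simp_all
qed

lemma agents_body_correct:
  assumes inv: "agents_inv j h" and j: "j < n"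
  shows "runs_within agents_body (heap_mem h) (1100 * cost_levels) (on_heap (agents_inv (Suc j)))"
  unfolding agents_body_def
proof (rule runs_within_Seq_heap)
  show "runs_within (If query_guard Skip (Seq (SetReg 10 (Load (Reg 0))) (Seq (SetReg 11 (WeightOf (Reg 0))) insert_prog)))
      (heap_mem h) (1 + 35 + (41 + 1000 * cost_levels)) (on_heap (agents_mid j))"
  proof (rule runs_within_If)
    assume "beval query_guard (heap_mem h)"
    then have "Suc j = i" using inv unfolding agents_inv_def query_guard_def by simp
    then have "{1..Suc j} - {i} = {1..j} - {i}" by auto
    then show "runs_within Skip (heap_mem h) (41 + 1000 * cost_levels) (on_heap (agents_mid j))"
      using inv unfolding agents_inv_def agents_mid_def by (intro runs_within_loop_free) auto
  next
    assume "\<not> beval query_guard (heap_mem h)"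
    then have "Suc j \<noteq> i" using inv unfolding agents_inv_def query_guard_def by auto
    then show "runs_within (Seq (SetReg 10 (Load (Reg 0))) (Seq (SetReg 11 (WeightOf (Reg 0))) insert_prog))
        (heap_mem h) (41 + 1000 * cost_levels) (on_heap (agents_mid j))"
      by (rule insert_agent_correct[OF inv j])
  qed (simp add: bcost_query_guard)
  fix h' assume "agents_mid j h'"
  then show "runs_within (SetReg 0 (Plus (Reg 0) (Num 1))) (heap_mem h') 20 (on_heap (agents_inv (Suc j)))"
    unfolding agents_mid_def agents_inv_def
    by (intro runs_within_loop_free) (auto intro!: tables_ready_upd count_table_upd)
qed (use cost_mono in simp)

lemma agents_prog_correct:
  assumes "tables_ready h" "count_table h (num_coalitions {})"
  shows "runs_within agents_prog (heap_mem h) (1300 * cost_total)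
           (on_heap (\<lambda>h'. tables_ready h' \<and> count_table h' (num_coalitions ({1..n} - {i}))))"
  unfolding agents_prog_def
proof (rule runs_within_Seq_While_heap[where P = agents_inv and m = n and Bd = "1100 * cost_levels"
      and h_init = "h(0 := num 1)"])
  show "agents_inv 0 (h(0 := num 1))"
    using assms unfolding agents_inv_def by (auto intro!: tables_ready_upd count_table_upd)
next
  fix j h' assume j: "j < n" and inv: "agents_inv j h'"
  have "beval agents_guard (heap_mem h')" using inv j unfolding agents_inv_def agents_guard_def by simp
  then show "beval agents_guard (heap_mem h')
      \<and> runs_within agents_body (heap_mem h') (1100 * cost_levels) (on_heap (agents_inv (Suc j)))"
    using agents_body_correct[OF inv j] by simp
next
  fix h' assume "agents_inv n h'"
  then show "\<not> beval agents_guard (heap_mem h') \<and> tables_ready h' \<and> count_table h' (num_coalitions ({1..n} - {i}))"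
    unfolding agents_inv_def agents_guard_def by simp
next
  have "n * (1 + bcost agents_guard + 1100 * cost_levels) + 1 + bcost agents_guard \<le> Suc n * (1200 * cost_levels)"
    using cost_mono unfolding bcost_agents_guard by (intro loop_cost_le) auto
  then show "lf_cost (SetReg 0 (Num 1)) + (n * (1 + bcost agents_guard + 1100 * cost_levels) + 1 + bcost agents_guard)
      \<le> 1300 * cost_total"
    using cost_mono unfolding cost_total_def by simp
qed simp_all

end

section \<open>Setting up the tables\<close>

definition ratio_body :: com where
  "ratio_body = Seq (SetReg 9 (Divide (WeightOf (Reg 0)) (Load (Reg 0))))
                (Seq (If (Le (Reg 15) (Reg 9)) (SetReg 15 (Reg 9)) Skip) (SetReg 0 (Plus (Reg 0) (Num 1))))"
definition setup_ratio :: com where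
  "setup_ratio = Seq (Seq (SetReg 18 BinSize) (Seq (SetReg 15 (Num 0)) (SetReg 0 (Num 1)))) (While agents_guard ratio_body)"
definition wmax_guard :: bexp where "wmax_guard = Not (Le (Times (Reg 18) (Reg 15)) (Reg 12))"
definition setup_wmax :: com where
  "setup_wmax = Seq (SetReg 12 (Num 0)) (While wmax_guard (SetReg 12 (Plus (Reg 12) (Num 1))))"
definition power_body :: com where
  "power_body = Seq (SetReg 14 (Times (Reg 14) (Reg 13))) (SetReg 3 (Plus (Reg 3) (Num 1)))"
definition setup_power :: com where
  "setup_power = Seq (Seq (SetReg 13 (Plus (Reg 12) (Num 1))) (Seq (SetReg 14 (Num 1)) (SetReg 3 (Num 0))))
                     (While digit_guard power_body)"
definition table_body :: com where
  "table_body = Seq (StoreH (Plus (Num 24) (Reg 2)) (Reg 2)) (SetReg 2 (Plus (Reg 2) (Num 1)))"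
definition setup_table :: com where "setup_table = Seq (SetReg 2 (Num 0)) (While code_guard table_body)"
definition setup_counts :: com where
  "setup_counts = Seq (SetReg 19 (Plus (Num 24) (Reg 14))) (StoreH (Reg 19) (Num 1))"
definition setup_prog :: com where
  "setup_prog = Seq setup_ratio (Seq setup_wmax (Seq setup_power (Seq setup_table setup_counts)))"

lemma bcost_wmax_guard: "bcost wmax_guard = 30" unfolding wmax_guard_def by simp

context knapsack_instance begin

definition ratio :: "nat \<Rightarrow> rat" where "ratio k = num (w k) / num (l k)"
definition max_ratio_upto :: "nat \<Rightarrow> rat" where "max_ratio_upto j = Max (insert 0 (ratio ` {1..<j}))"
definition "max_ratio_rat = max_ratio_upto (Suc n)"

lemma max_ratio_upto_Suc: "1 \<le> k \<Longrightarrow> max_ratio_upto (Suc k) = max (ratio k) (max_ratio_upto k)"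
proof -
  assume k: "1 \<le> k"
  have "{1..<Suc k} = insert k {1..<k}" using k by auto
  then have "insert 0 (ratio ` {1..<Suc k}) = insert (ratio k) (insert 0 (ratio ` {1..<k}))" by auto
  then show ?thesis unfolding max_ratio_upto_def by (simp add: Max_insert)
qed

lemma max_ratio_upto_nonneg: "0 \<le> max_ratio_upto j" unfolding max_ratio_upto_def by (rule Max_ge) auto

lemma max_ratio_eq_of_rat: "max_ratio = of_rat max_ratio_rat"
proof -
  have fin: "finite (insert 0 (ratio ` {1..n}))" by simp
  have "of_rat (Max (insert 0 (ratio ` {1..n}))) = Max (of_rat ` (insert 0 (ratio ` {1..n})) :: real set)"
    by (rule mono_Max_commute[OF _ fin]) (auto simp: mono_def of_rat_less_eq)
  also have "of_rat ` (insert 0 (ratio ` {1..n})) = insert 0 ((\<lambda>k. real (w k) / real (l k)) ` {1..n})"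
    unfolding ratio_def num_def by (auto simp: of_rat_divide image_image)
  also have "Max (insert 0 ((\<lambda>k. real (w k) / real (l k)) ` {1..n})) = max_ratio"
  proof -
    have "(\<lambda>k. real (w k) / real (l k)) ` {1..n} \<noteq> {}" using n_pos by auto
    then have "Max (insert 0 ((\<lambda>k. real (w k) / real (l k)) ` {1..n})) = max 0 max_ratio"
      unfolding max_ratio_def by (simp add: Max_insert)
    then show ?thesis using max_ratio_nonneg by simp
  qed
  finally show ?thesis unfolding max_ratio_rat_def max_ratio_upto_def by (simp add: atLeastLessThanSuc_atLeastAtMost)
qed

lemma W_eq_ceiling: "W = nat \<lceil>num lbin * max_ratio_rat\<rceil>"
proof -
  have "real lbin * max_ratio = of_rat (num lbin * max_ratio_rat)"
    unfolding max_ratio_eq_of_rat num_def by (simp add: of_rat_mult)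
  then have "w_max n l w lbin = \<lceil>num lbin * max_ratio_rat\<rceil>" unfolding w_max_def max_ratio_def[symmetric] by simp
  then show ?thesis unfolding W_def by simp
qed

lemma wmax_guard_iff: "j \<le> W \<Longrightarrow> (num lbin * max_ratio_rat \<le> num j) \<longleftrightarrow> j = W"
proof -
  assume j: "j \<le> W"
  have q0: "0 \<le> num lbin * max_ratio_rat" unfolding max_ratio_rat_def using max_ratio_upto_nonneg by simp
  show ?thesis
  proof
    assume "num lbin * max_ratio_rat \<le> num j"
    then have "\<lceil>num lbin * max_ratio_rat\<rceil> \<le> int j" unfolding num_def by (simp add: ceiling_le_iff)
    then show "j = W" using j unfolding W_eq_ceiling by simp
  next
    assume "j = W"
    then have "int j = \<lceil>num lbin * max_ratio_rat\<rceil>" unfolding W_eq_ceiling using q0 by simp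
    then show "num lbin * max_ratio_rat \<le> num j" unfolding num_def by (metis le_of_int_ceiling of_int_of_nat_eq)
  qed
qed

lemma W_lt_Q: "W < Q"
proof -
  have "B ^ 1 \<le> B ^ Suc lbin" using B_pos by (intro power_increasing) auto
  then show ?thesis unfolding Q_def B_def by simp
qed

lemma cost_total_ge: "Suc n \<le> cost_total" "Suc Q \<le> cost_total" "cost_digits \<le> cost_total"
proof -
  have Q: "Suc Q \<le> cost_codes"
    using mult_le_mono2[of 1 cost_digits "Suc Q"] cost_mono(1) unfolding cost_codes_def by simp
  have "Suc n \<le> cost_levels"
    using mult_le_mono2[of 1 cost_codes "Suc n"] cost_mono(1,2) unfolding cost_levels_def by simp
  then show "Suc n \<le> cost_total" using cost_mono by linarith
  show "Suc Q \<le> cost_total" using Q cost_mono by linarith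
  show "cost_digits \<le> cost_total" using cost_mono by linarith
qed

definition scratch_clear :: "(nat \<Rightarrow> rat) \<Rightarrow> bool" where "scratch_clear h \<longleftrightarrow> (\<forall>a\<ge>24. h a = 0)"

lemma scratch_clear_upd: "a < 24 \<Longrightarrow> scratch_clear h \<Longrightarrow> scratch_clear (h(a := v))"
  unfolding scratch_clear_def by auto

definition ratio_inv :: "nat \<Rightarrow> (nat \<Rightarrow> rat) \<Rightarrow> bool" where
  "ratio_inv j h \<longleftrightarrow> h 18 = num lbin \<and> h 0 = num (Suc j) \<and> h 15 = max_ratio_upto (Suc j) \<and> scratch_clear h"
definition wmax_inv :: "nat \<Rightarrow> (nat \<Rightarrow> rat) \<Rightarrow> bool" where
  "wmax_inv j h \<longleftrightarrow> h 18 = num lbin \<and> h 15 = max_ratio_rat \<and> h 12 = num j \<and> scratch_clear h"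
definition power_inv :: "nat \<Rightarrow> (nat \<Rightarrow> rat) \<Rightarrow> bool" where
  "power_inv j h \<longleftrightarrow> h 18 = num lbin \<and> h 12 = num W \<and> h 13 = num B \<and> h 14 = num (B ^ j) \<and> h 3 = num j
     \<and> scratch_clear h"
definition table_inv :: "nat \<Rightarrow> (nat \<Rightarrow> rat) \<Rightarrow> bool" where
  "table_inv j h \<longleftrightarrow> h 18 = num lbin \<and> h 12 = num W \<and> h 13 = num B \<and> h 14 = num Q \<and> h 2 = num j \<and>
     (\<forall>z<j. h (24 + z) = num z) \<and> (\<forall>a\<ge>24 + Q. h a = 0)"

lemma ratio_body_correct:
  assumes inv: "ratio_inv j h" and j: "j < n"
  shows "runs_within ratio_body (heap_mem h) 200 (on_heap (ratio_inv (Suc j)))"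
proof (rule runs_within_loop_free)
  have h: "h 18 = num lbin" "h 0 = num (Suc j)" "h 15 = max_ratio_upto (Suc j)" "scratch_clear h"
    using inv unfolding ratio_inv_def by auto
  have e1: "eval (Load (Reg 0)) (heap_mem h) = num (l (Suc j))" using h j by (intro eval_Load_length) auto
  have e2: "eval (WeightOf (Reg 0)) (heap_mem h) = num (w (Suc j))" using h j by (intro eval_WeightOf) auto
  have rs: "max_ratio_upto (Suc (Suc j)) = max (ratio (Suc j)) (max_ratio_upto (Suc j))"
    by (rule max_ratio_upto_Suc) simp
  show "on_heap (ratio_inv (Suc j)) (run_lf ratio_body (heap_mem h))"
    unfolding ratio_body_def using h e1 e2 rs
    by (auto simp: ratio_inv_def ratio_def[symmetric] max_def intro!: scratch_clear_upd)
qed (simp add: ratio_body_def)+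

lemma setup_ratio_correct:
  "runs_within setup_ratio (heap_mem (\<lambda>_. 0)) (300 * cost_total) (on_heap (ratio_inv n))"
  unfolding setup_ratio_def
proof (rule runs_within_Seq_While_heap[where P = ratio_inv and m = n and Bd = 200
      and h_init = "(\<lambda>_. 0)(18 := num lbin, 15 := num 0, 0 := num 1)"])
  show "ratio_inv 0 ((\<lambda>_. 0)(18 := num lbin, 15 := num 0, 0 := num 1))"
    unfolding ratio_inv_def scratch_clear_def max_ratio_upto_def by (simp add: num_def)
next
  fix j h' assume "j < n" "ratio_inv j h'"
  then show "beval agents_guard (heap_mem h') \<and> runs_within ratio_body (heap_mem h') 200 (on_heap (ratio_inv (Suc j)))"
    using ratio_body_correct unfolding ratio_inv_def agents_guard_def by simp
next
  fix h' assume "ratio_inv n h'"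
  then show "\<not> beval agents_guard (heap_mem h') \<and> ratio_inv n h'"
    unfolding ratio_inv_def agents_guard_def by simp
qed (use cost_total_ge(1) in \<open>simp_all add: bcost_agents_guard\<close>)

lemma setup_wmax_correct:
  assumes "ratio_inv n h"
  shows "runs_within setup_wmax (heap_mem h) (100 * cost_total) (on_heap (wmax_inv W))"
  unfolding setup_wmax_def
proof (rule runs_within_Seq_While_heap[where P = wmax_inv and m = W and Bd = 20 and h_init = "h(12 := num 0)"])
  show "wmax_inv 0 (h(12 := num 0))"
    using assms unfolding ratio_inv_def wmax_inv_def max_ratio_rat_def by (auto intro: scratch_clear_upd)
next
  fix j h' assume j: "j < W" and inv: "wmax_inv j h'"
  have "\<not> (num lbin * max_ratio_rat \<le> num j)" using wmax_guard_iff[of j] j by auto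
  then show "beval wmax_guard (heap_mem h')
      \<and> runs_within (SetReg 12 (Plus (Reg 12) (Num 1))) (heap_mem h') 20 (on_heap (wmax_inv (Suc j)))"
    using inv unfolding wmax_inv_def wmax_guard_def
    by (auto intro!: runs_within_loop_free scratch_clear_upd)
next
  fix h' assume inv: "wmax_inv W h'"
  have "num lbin * max_ratio_rat \<le> num W" using wmax_guard_iff[of W] by simp
  then show "\<not> beval wmax_guard (heap_mem h') \<and> wmax_inv W h'" using inv unfolding wmax_inv_def wmax_guard_def by simp
qed (use cost_total_ge(2) W_lt_Q in \<open>simp_all add: bcost_wmax_guard\<close>)

lemma setup_power_correct:
  assumes "wmax_inv W h"
  shows "runs_within setup_power (heap_mem h) (200 * cost_total) (on_heap (power_inv (Suc lbin)))"
  unfolding setup_power_def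
proof (rule runs_within_Seq_While_heap[where P = power_inv and m = "Suc lbin" and Bd = 48
      and h_init = "h(13 := num B, 14 := num 1, 3 := num 0)"])
  show "run_lf (Seq (SetReg 13 (Plus (Reg 12) (Num 1))) (Seq (SetReg 14 (Num 1)) (SetReg 3 (Num 0)))) (heap_mem h)
          = heap_mem (h(13 := num B, 14 := num 1, 3 := num 0))"
    using assms unfolding wmax_inv_def B_def by simp
  show "power_inv 0 (h(13 := num B, 14 := num 1, 3 := num 0))"
    using assms unfolding wmax_inv_def power_inv_def by (auto intro!: scratch_clear_upd)
next
  fix j h' assume j: "j < Suc lbin" and inv: "power_inv j h'"
  then show "beval digit_guard (heap_mem h') \<and> runs_within power_body (heap_mem h') 48 (on_heap (power_inv (Suc j)))"
    unfolding power_body_def power_inv_def digit_guard_def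
    by (auto intro!: runs_within_loop_free scratch_clear_upd simp: mult.commute)
next
  fix h' assume "power_inv (Suc lbin) h'"
  then show "\<not> beval digit_guard (heap_mem h') \<and> power_inv (Suc lbin) h'"
    unfolding power_inv_def digit_guard_def by simp
qed (use cost_total_ge(3) in \<open>simp_all add: bcost_digit_guard cost_digits_def\<close>)

lemma setup_table_correct:
  assumes "power_inv (Suc lbin) h"
  shows "runs_within setup_table (heap_mem h) (100 * cost_total) (on_heap (table_inv Q))"
  unfolding setup_table_def
proof (rule runs_within_Seq_While_heap[where P = table_inv and m = Q and Bd = 48 and h_init = "h(2 := num 0)"])
  show "table_inv 0 (h(2 := num 0))"
    using assms unfolding power_inv_def table_inv_def scratch_clear_def Q_def by auto
next
  fix j h' assume j: "j < Q" and inv: "table_inv j h'"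
  have "run_lf table_body (heap_mem h') = heap_mem (h'(24 + j := num j, 2 := num (Suc j)))"
    using inv unfolding table_body_def table_inv_def by simp
  moreover have "table_inv (Suc j) (h'(24 + j := num j, 2 := num (Suc j)))"
    using inv j unfolding table_inv_def by (auto simp: less_Suc_eq)
  ultimately show "beval code_guard (heap_mem h') \<and> runs_within table_body (heap_mem h') 48 (on_heap (table_inv (Suc j)))"
    using inv j unfolding table_inv_def code_guard_def by (auto intro!: runs_within_loop_free simp: table_body_def)
next
  fix h' assume "table_inv Q h'"
  then show "\<not> beval code_guard (heap_mem h') \<and> table_inv Q h'" unfolding table_inv_def code_guard_def by simp
qed (use cost_total_ge(2) in \<open>simp_all add: bcost_code_guard\<close>)

lemma setup_counts_correct:
  assumes inv: "table_inv Q h"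
  shows "runs_within setup_counts (heap_mem h) 50 (on_heap (\<lambda>h. tables_ready h \<and> count_table h (num_coalitions {})))"
proof (rule runs_within_loop_free)
  define h' where "h' = h(19 := num count_base)"
  have "count_table h' (\<lambda>_ _. 0)"
    using inv unfolding h'_def table_inv_def count_table_def count_base_def by (simp add: num_def)
  then have "count_table (h'(count_base + 0 * Q + 0 := num 1)) (num_coalitions {})"
    using count_table_upd_cell[of h' "\<lambda>_ _. 0" 0 0 1] B_pos unfolding num_coalitions_empty Q_def by simp
  moreover have "tables_ready (h'(count_base := num 1))"
    using inv unfolding h'_def table_inv_def tables_ready_def count_base_def by auto
  moreover have "run_lf setup_counts (heap_mem h) = heap_mem (h'(count_base := num 1))"
    using inv unfolding setup_counts_def table_inv_def h'_def count_base_def by simp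
  ultimately show "on_heap (\<lambda>h. tables_ready h \<and> count_table h (num_coalitions {})) (run_lf setup_counts (heap_mem h))"
    by simp
qed (simp_all add: setup_counts_def)

lemma setup_prog_correct:
  "runs_within setup_prog (heap_mem (\<lambda>_. 0)) (1000 * cost_total)
     (on_heap (\<lambda>h. tables_ready h \<and> count_table h (num_coalitions {})))"
  (is "runs_within _ _ _ ?ready")
  unfolding setup_prog_def
proof (rule runs_within_Seq_heap[OF setup_ratio_correct])
  fix h1 assume h1: "ratio_inv n h1"
  show "runs_within (Seq setup_wmax (Seq setup_power (Seq setup_table setup_counts))) (heap_mem h1) (700 * cost_total) ?ready"
  proof (rule runs_within_Seq_heap[OF setup_wmax_correct[OF h1]])
    fix h2 assume h2: "wmax_inv W h2"
    show "runs_within (Seq setup_power (Seq setup_table setup_counts)) (heap_mem h2) (600 * cost_total) ?ready"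
    proof (rule runs_within_Seq_heap[OF setup_power_correct[OF h2]])
      fix h3 assume h3: "power_inv (Suc lbin) h3"
      show "runs_within (Seq setup_table setup_counts) (heap_mem h3) (400 * cost_total) ?ready"
        by (rule runs_within_Seq_heap[OF setup_table_correct[OF h3] setup_counts_correct])
          (use cost_total_ge(1) in auto)
    qed simp
  qed simp
qed simp

end

section \<open>Summing up the Shapley value\<close>

definition sum_start :: com where
  "sum_start = Seq (SetReg 10 (Load QueryAgent)) (Seq (SetReg 11 (WeightOf QueryAgent))
                 (Seq (SetReg 16 (Num 0)) (Seq (SetReg 17 (Divide (Num 1) NAgents)) (SetReg 1 (Num 0)))))"
definition count_cell :: expr where "count_cell = Plus (Plus (Reg 19) (Times (Reg 1) (Reg 14))) (Reg 2)"
definition sum_rest :: com where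
  "sum_rest = Seq (SetReg 16 (Plus (Reg 16) (Times (Times (Reg 17) (LoadH count_cell)) (Minus (Reg 8) (Reg 7)))))
                  (SetReg 2 (Plus (Reg 2) (Num 1)))"
definition sum_code_body :: com where "sum_code_body = Seq add_agent_prog sum_rest"
definition sum_code_prog :: com where "sum_code_prog = Seq (SetReg 2 (Num 0)) (While code_guard sum_code_body)"
definition next_size :: com where
  "next_size = Seq (SetReg 17 (Divide (Times (Reg 17) (Plus (Reg 1) (Num 1))) (Minus (Minus NAgents (Reg 1)) (Num 1))))
                   (SetReg 1 (Plus (Reg 1) (Num 1)))"
definition sum_body :: com where "sum_body = Seq sum_code_prog next_size"
definition size_guard :: bexp where "size_guard = Not (Le NAgents (Reg 1))"
definition sum_loop :: com where "sum_loop = Seq sum_start (While size_guard sum_body)"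
definition sum_prog :: com where "sum_prog = Seq sum_loop (Store (Const 0) (Reg 16))"

lemma loop_free_sum_rest: "loop_free sum_rest" unfolding sum_rest_def by simp
lemma lf_cost_sum_rest: "lf_cost sum_rest \<le> 200" unfolding sum_rest_def count_cell_def by simp
lemma loop_free_next_size: "loop_free next_size" unfolding next_size_def by simp
lemma lf_cost_next_size: "lf_cost next_size \<le> 100" unfolding next_size_def by simp
lemma loop_free_sum_start: "loop_free sum_start" unfolding sum_start_def by simp
lemma lf_cost_sum_start: "lf_cost sum_start \<le> 100" unfolding sum_start_def by simp
lemma bcost_size_guard: "bcost size_guard = 13" unfolding size_guard_def by simp

context knapsack_instance begin

definition "others = {1..n} - {i}"
definition shapley_coeff_rat :: "nat \<Rightarrow> rat" where "shapley_coeff_rat s = fact s * fact (n - s - 1) / fact n"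
definition shapley_term :: "nat \<Rightarrow> nat \<Rightarrow> rat" where
  "shapley_term s x = shapley_coeff_rat s * num (num_coalitions others s x)
                        * (num (new_digit (l i) (w i) x lbin) - num (digit x lbin))"
definition shapley_partial :: "nat \<Rightarrow> rat" where "shapley_partial s = (\<Sum>s'<s. \<Sum>x<Q. shapley_term s' x)"

lemma shapley_coeff_rat_0: "shapley_coeff_rat 0 = num 1 / num n"
proof -
  have f: "fact n = (of_nat n * fact (n - 1) :: rat)" using n_pos by (simp add: fact_reduce)
  have "shapley_coeff_rat 0 = fact (n - 1) / fact n" unfolding shapley_coeff_rat_def by simp
  also have "\<dots> = 1 / of_nat n" unfolding f by simp
  finally show ?thesis unfolding num_def by simp
qed

lemma shapley_coeff_rat_Suc:
  "Suc s < n \<Longrightarrow> shapley_coeff_rat (Suc s) = shapley_coeff_rat s * num (Suc s) / num (n - s - 1)"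
proof -
  assume s: "Suc s < n"
  define m where "m = n - s - 2"
  have m: "n - s - 1 = Suc m" using s unfolding m_def by arith
  have m2: "n - Suc s - 1 = m" using m by simp
  have "shapley_coeff_rat s * num (Suc s) / num (n - s - 1)
          = fact s * (fact (Suc m) :: rat) / fact n * of_nat (Suc s) / of_nat (Suc m)"
    unfolding shapley_coeff_rat_def m num_def by simp
  also have "\<dots> = fact (Suc s) * fact m / fact n"
    by (simp add: field_simps del: of_nat_Suc)
  also have "\<dots> = shapley_coeff_rat (Suc s)" unfolding shapley_coeff_rat_def m2 ..
  finally show ?thesis by simp
qed

definition sum_inv :: "nat \<Rightarrow> (nat \<Rightarrow> rat) \<Rightarrow> bool" where
  "sum_inv s h \<longleftrightarrow> tables_ready h \<and> h 10 = num (l i) \<and> h 11 = num (w i) \<and> h 1 = num s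
     \<and> count_table h (num_coalitions others) \<and> h 16 = shapley_partial s \<and> (s < n \<longrightarrow> h 17 = shapley_coeff_rat s)"
definition sum_code_inv :: "nat \<Rightarrow> nat \<Rightarrow> (nat \<Rightarrow> rat) \<Rightarrow> bool" where
  "sum_code_inv s j h \<longleftrightarrow> tables_ready h \<and> h 10 = num (l i) \<and> h 11 = num (w i) \<and> h 1 = num s \<and> h 2 = num j
     \<and> count_table h (num_coalitions others) \<and> h 17 = shapley_coeff_rat s
     \<and> h 16 = shapley_partial s + (\<Sum>x<j. shapley_term s x)"

lemma run_lf_sum_rest:
  assumes "h1 1 = num s" "h1 14 = num Q" "h1 19 = num count_base" "h1 2 = num j"
  shows "run_lf sum_rest (heap_mem h1)
           = heap_mem (h1(16 := h1 16 + h1 17 * h1 (count_base + s * Q + j) * (h1 8 - h1 7), 2 := num (Suc j)))"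
  using assms unfolding sum_rest_def count_cell_def by simp

lemma sum_code_body_correct:
  assumes inv: "sum_code_inv s j h" and s: "s < n" and j: "j < Q"
  shows "runs_within sum_code_body (heap_mem h) (add_agent_cost + 200) (on_heap (sum_code_inv s (Suc j)))"
  unfolding sum_code_body_def
proof (rule runs_within_Seq_heap)
  have h: "tables_ready h" "h 2 = num j" "h 10 = num (l i)" "h 11 = num (w i)" "h 1 = num s"
    using inv unfolding sum_code_inv_def by auto
  then show "runs_within add_agent_prog (heap_mem h) add_agent_cost (on_heap (add_agent_post h j (l i) (w i)))"
    using j by (intro add_agent_prog_correct) auto
  fix h1 assume post: "add_agent_post h j (l i) (w i) h1"
  then have fr: "\<forall>a. a \<notin> {3..9} \<longrightarrow> h1 a = h a" unfolding add_agent_post_def by blast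
  have hv: "h1 1 = num s" "h1 14 = num Q" "h1 19 = num count_base" "h1 2 = num j" "h1 16 = h 16" "h1 17 = h 17"
    using fr h unfolding tables_ready_def by auto
  have table: "count_table h1 (num_coalitions others)" and ready: "tables_ready h1"
    using inv fr unfolding sum_code_inv_def by (auto intro: count_table_frame tables_ready_frame)
  have "h1 16 + h1 17 * h1 (count_base + s * Q + j) * (h1 8 - h1 7) = shapley_partial s + (\<Sum>x<Suc j. shapley_term s x)"
    using inv post table s j unfolding hv sum_code_inv_def add_agent_post_def count_table_def shapley_term_def
    by simp
  then have "sum_code_inv s (Suc j) (h1(16 := h1 16 + h1 17 * h1 (count_base + s * Q + j) * (h1 8 - h1 7), 2 := num (Suc j)))"
    using inv ready table hv fr unfolding sum_code_inv_def by (auto intro!: tables_ready_upd count_table_upd)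
  then show "runs_within sum_rest (heap_mem h1) 200 (on_heap (sum_code_inv s (Suc j)))"
    using run_lf_sum_rest[OF hv(1-4)] lf_cost_sum_rest
    by (intro runs_within_loop_free[OF loop_free_sum_rest]) simp_all
qed simp

lemma sum_code_prog_correct:
  assumes inv: "sum_inv s h" and s: "s < n"
  shows "runs_within sum_code_prog (heap_mem h) (800 * cost_codes) (on_heap (sum_code_inv s Q))"
  unfolding sum_code_prog_def
proof (rule runs_within_Seq_While_heap[where P = "sum_code_inv s" and m = Q and Bd = "add_agent_cost + 200"
      and h_init = "h(2 := num 0)"])
  show "sum_code_inv s 0 (h(2 := num 0))"
    using inv s unfolding sum_inv_def sum_code_inv_def by (auto intro: tables_ready_upd count_table_upd)
next
  fix j h' assume j: "j < Q" and inv': "sum_code_inv s j h'"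
  have "beval code_guard (heap_mem h')" using inv' j unfolding sum_code_inv_def tables_ready_def code_guard_def by simp
  then show "beval code_guard (heap_mem h')
      \<and> runs_within sum_code_body (heap_mem h') (add_agent_cost + 200) (on_heap (sum_code_inv s (Suc j)))"
    using sum_code_body_correct[OF inv' s j] by simp
next
  fix h' assume "sum_code_inv s Q h'"
  then show "\<not> beval code_guard (heap_mem h') \<and> sum_code_inv s Q h'"
    unfolding sum_code_inv_def tables_ready_def code_guard_def by simp
next
  have "Q * (1 + bcost code_guard + (add_agent_cost + 200)) + 1 + bcost code_guard \<le> Suc Q * (700 * cost_digits)"
    using cost_mono unfolding bcost_code_guard add_agent_cost_def cost_digits_def by (intro loop_cost_le) auto
  then show "lf_cost (SetReg 2 (Num 0)) + (Q * (1 + bcost code_guard + (add_agent_cost + 200)) + 1 + bcost code_guard)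
      \<le> 800 * cost_codes"
    using cost_mono unfolding cost_codes_def by simp
qed simp_all

lemma sum_body_correct:
  assumes inv: "sum_inv s h" and s: "s < n"
  shows "runs_within sum_body (heap_mem h) (900 * cost_codes) (on_heap (sum_inv (Suc s)))"
  unfolding sum_body_def
proof (rule runs_within_Seq_heap[OF sum_code_prog_correct[OF inv s]])
  fix h' assume inv': "sum_code_inv s Q h'"
  define h2 where "h2 = h'(17 := shapley_coeff_rat s * num (Suc s) / num (n - s - 1), 1 := num (Suc s))"
  have "run_lf next_size (heap_mem h') = heap_mem h2"
    using inv' s unfolding h2_def next_size_def sum_code_inv_def by simp
  moreover have "shapley_partial (Suc s) = shapley_partial s + (\<Sum>x<Q. shapley_term s x)"
    unfolding shapley_partial_def by (rule sum.lessThan_Suc)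
  then have "sum_inv (Suc s) h2"
    using inv' shapley_coeff_rat_Suc unfolding sum_inv_def sum_code_inv_def h2_def
    by (auto intro!: tables_ready_upd count_table_upd)
  ultimately show "runs_within next_size (heap_mem h') 100 (on_heap (sum_inv (Suc s)))"
    using lf_cost_next_size by (intro runs_within_loop_free[OF loop_free_next_size]) simp_all
qed (use cost_mono in simp)

lemma sum_loop_correct:
  assumes h: "tables_ready h" "count_table h (num_coalitions others)"
  shows "runs_within sum_loop (heap_mem h) (1050 * cost_total) (on_heap (sum_inv n))"
  unfolding sum_loop_def
proof (rule runs_within_Seq_While_heap[where P = sum_inv and m = n and Bd = "900 * cost_codes"
      and h_init = "h(10 := num (l i), 11 := num (w i), 16 := num 0, 17 := num 1 / num n, 1 := num 0)"])
  have "eval (Load QueryAgent) (heap_mem h) = num (l i)" using irange by (intro eval_Load_length) auto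
  moreover have "eval (WeightOf QueryAgent) (heap_mem (h(10 := num (l i)))) = num (w i)"
    using irange by (intro eval_WeightOf) auto
  ultimately show "run_lf sum_start (heap_mem h)
      = heap_mem (h(10 := num (l i), 11 := num (w i), 16 := num 0, 17 := num 1 / num n, 1 := num 0))"
    unfolding sum_start_def by simp
  show "sum_inv 0 (h(10 := num (l i), 11 := num (w i), 16 := num 0, 17 := num 1 / num n, 1 := num 0))"
    using h unfolding sum_inv_def shapley_partial_def shapley_coeff_rat_0
    by (auto intro!: tables_ready_upd count_table_upd simp: num_def)
next
  fix s h' assume s: "s < n" and inv: "sum_inv s h'"
  have "beval size_guard (heap_mem h')" using s inv unfolding sum_inv_def size_guard_def by simp
  then show "beval size_guard (heap_mem h') \<and> runs_within sum_body (heap_mem h') (900 * cost_codes) (on_heap (sum_inv (Suc s)))"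
    using sum_body_correct[OF inv s] by simp
next
  fix h' assume "sum_inv n h'"
  then show "\<not> beval size_guard (heap_mem h') \<and> sum_inv n h'" unfolding sum_inv_def size_guard_def by simp
next
  have "n * (1 + bcost size_guard + 900 * cost_codes) + 1 + bcost size_guard \<le> Suc n * (1000 * cost_codes)"
    using cost_mono unfolding bcost_size_guard by (intro loop_cost_le) auto
  also have "\<dots> = 1000 * cost_levels" unfolding cost_levels_def by simp
  finally show "lf_cost sum_start + (n * (1 + bcost size_guard + 900 * cost_codes) + 1 + bcost size_guard)
      \<le> 1050 * cost_total"
    using cost_mono lf_cost_sum_start by linarith
qed (rule loop_free_sum_start)

lemma sum_prog_correct:
  assumes "tables_ready h" "count_table h (num_coalitions others)"
  shows "runs_within sum_prog (heap_mem h) (1100 * cost_total) (\<lambda>M. M 0 = shapley_partial n)"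
  unfolding sum_prog_def
proof (rule runs_within_Seq_heap[OF sum_loop_correct[OF assms]])
  fix h' assume "sum_inv n h'"
  then show "runs_within (Store (Const 0) (Reg 16)) (heap_mem h') 11 (\<lambda>M. M 0 = shapley_partial n)"
    unfolding sum_inv_def by (intro runs_within_loop_free) (simp_all add: addr_def)
qed (use cost_mono in simp)

end

definition shapley_prog :: com where "shapley_prog = Seq setup_prog (Seq agents_prog sum_prog)"

lemma of_rat_fact: "(of_rat (fact k :: rat) :: real) = fact k"
  by (metis of_nat_fact of_rat_of_nat_eq)

context knapsack_instance begin

lemma shapley_prog_correct:
  "runs_within shapley_prog (input_mem n l w lbin i) (3400 * cost_total) (\<lambda>M. M 0 = shapley_partial n)"
  unfolding shapley_prog_def input_mem_eq_heap_mem
proof (rule runs_within_Seq_heap[OF setup_prog_correct])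
  fix h assume h: "tables_ready h \<and> count_table h (num_coalitions {})"
  show "runs_within (Seq agents_prog sum_prog) (heap_mem h) (2400 * cost_total) (\<lambda>M. M 0 = shapley_partial n)"
  proof (rule runs_within_Seq_heap[OF agents_prog_correct])
    fix h' assume "tables_ready h' \<and> count_table h' (num_coalitions ({1..n} - {i}))"
    then show "runs_within sum_prog (heap_mem h') (1100 * cost_total) (\<lambda>M. M 0 = shapley_partial n)"
      by (intro sum_prog_correct) (auto simp: others_def)
  qed (use h in auto)
qed simp

lemma shapley_partial_eq_shapley: "real_of_rat (shapley_partial n) = shapley n (knapsack_game l w lbin) i"
proof -
  have coeff: "real_of_rat (shapley_coeff_rat s) = shapley_coeff s" for s
    unfolding shapley_coeff_rat_def shapley_coeff_def of_rat_divide of_rat_mult of_rat_fact ..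
  have "real_of_rat (shapley_term s x)
          = shapley_coeff s * real (num_coalitions others s x) * (real (new_digit (l i) (w i) x lbin) - real (digit x lbin))"
    for s x
    unfolding shapley_term_def num_def of_rat_mult of_rat_diff coeff of_rat_of_nat_eq ..
  then show ?thesis
    unfolding shapley_partial_def of_rat_sum shapley_eq_sum_num_coalitions others_def by simp
qed

lemma cost_total_le:
  "real cost_total \<le> 24 * (real lbin * (real_of_int (w_max n l w lbin) + 1) ^ (lbin + 1) * real n ^ 2)"
proof -
  have "Suc n \<le> 2 * n" "Suc Q \<le> 2 * Q" "lbin + 2 \<le> 3 * lbin"
    using n_pos lbin_pos B_pos unfolding Q_def by auto
  then have "cost_total \<le> (2 * n) * ((2 * n) * ((2 * Q) * (3 * lbin)))"
    unfolding cost_total_def cost_levels_def cost_codes_def cost_digits_def by (intro mult_le_mono) auto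
  also have "\<dots> = 24 * (lbin * Q * n ^ 2)" by (simp add: power2_eq_square algebra_simps)
  finally have "real cost_total \<le> 24 * (real lbin * real Q * real n ^ 2)"
    by (metis of_nat_le_iff of_nat_mult of_nat_numeral of_nat_power)
  moreover have "real Q = real (Suc W) ^ Suc lbin" unfolding Q_def B_def by (simp only: of_nat_power)
  ultimately show ?thesis unfolding w_max_eq_W by (simp add: add.commute)
qed

lemma shapley_prog_computes_shapley:
  "\<exists>t M'. exec shapley_prog (input_mem n l w lbin i) t M'
     \<and> real_of_rat (M' 0) = shapley n (knapsack_game l w lbin) i
     \<and> real t \<le> 81600 * (real lbin * (real_of_int (w_max n l w lbin) + 1) ^ (lbin + 1) * real n ^ 2)"
proof -
  obtain t M' where "exec shapley_prog (input_mem n l w lbin i) t M'" "t \<le> 3400 * cost_total"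
    "M' 0 = shapley_partial n"
    using shapley_prog_correct unfolding runs_within_def by blast
  with cost_total_le shapley_partial_eq_shapley show ?thesis
    by (intro exI[of _ t] exI[of _ M']) auto
qed

end

theorem theorem2:
  "\<exists>(P :: com) (C :: real).
     \<forall>(n :: nat) (l :: nat \<Rightarrow> nat) (w :: nat \<Rightarrow> nat) (lbin :: nat) (i :: nat).
       valid_knapsack n l lbin \<and> i \<in> {1..n} \<longrightarrow>
       (\<exists>t M'. exec P (input_mem n l w lbin i) t M' \<and>
          real_of_rat (M' 0) = shapley n (knapsack_game l w lbin) i \<and>
          real t \<le> C * (real lbin * (real_of_int (w_max n l w lbin) + 1) ^ (lbin + 1) * real n ^ 2))"
proof (intro exI[where x = shapley_prog] exI[where x = "81600 :: real"] allI impI)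
  fix n l w lbin i
  assume "valid_knapsack n l lbin \<and> i \<in> {1..n}"
  then interpret knapsack_instance n l w lbin i by unfold_locales auto
  show "\<exists>t M'. exec shapley_prog (input_mem n l w lbin i) t M'
          \<and> real_of_rat (M' 0) = shapley n (knapsack_game l w lbin) i
          \<and> real t \<le> 81600 * (real lbin * (real_of_int (w_max n l w lbin) + 1) ^ (lbin + 1) * real n ^ 2)"
    by (rule shapley_prog_computes_shapley)
qed

end
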